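(* Suppose the joint distribution of $(Y,X,W_1)$ is known, $\operatorname{cov}(W_1,X)\ne0$, and $\beta_{\text{med}}\ge 0$. Let $\mathcal B_I(\bar r_X)=\mathcal B_I(\bar r_X,0,1)$ and $\bar r_X^{\text{bp}}=\inf\{\bar r_X\ge0: b\in\mathcal B_I(\bar r_X)\text{ for some } b\le 0\}$. Then $$\bar r_X^{\text{bp}}=\left(\frac{R^2_{Y\sim X\bullet W_1}}{\frac{R^2_{X\sim W_1}}{1-R^2_{X\sim W_1}}+R^2_{Y\sim X\bullet W_1}}\right)^{1/2},$$ where $R^2_{Y\sim X\bullet W_1}=\beta_{\text{med}}^2\operatorname{var}(X^{\perp W_1})/\operatorname{var}(Y^{\perp W_1})$.
   Context: Let $(Y,X,W_1,W_2)$ be a random vector with finite second moments, $Y,X\in\mathbb R$, $W_1\in\mathbb R^{d_1}$, $W_2\in\mathbb R$. For random vectors $A,B$ with $\operatorname{var}(B)$ invertible, $A^{\perp B}=A-\operatorname{cov}(A,B)\operatorname{var}(B)^{-1}B$. $\beta_{\text{long}},\gamma_1,\gamma_2$ are the coefficients on $X,W_1,W_2$ in the linear projection of $Y$ on $(1,X,W_1,W_2)$; $\pi_1,\pi_2$ the coefficients on $W_1,W_2$ in the linear projection of $X$ on $(1,W_1,W_2)$; $\beta_{\text{med}}$ the coefficient on $X$ in the linear projection of $Y$ on $(1,X,W_1)$. $\Sigma_{\text{obs}}=\operatorname{var}(W_1)$, $c=\operatorname{cov}(W_1,W_2)$, $R_{W_2\sim W_1}=\sqrt{c'\Sigma_{\text{obs}}^{-1}c/\operatorname{var}(W_2)}$.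 $R^2_{X\sim W_1}$ is the population $R^2$ of the projection of $X$ on $(1,W_1)$. Assumptions: (A1) $\operatorname{var}(Y,X,W_1,W_2)$ positive definite; (A-rx) $\sqrt{\operatorname{var}(\pi_2W_2)}\le\bar r_X\sqrt{\operatorname{var}(\pi_1'W_1)}$; (A-c) $R_{W_2\sim W_1}\in[\underline c,\bar c]$. $\mathcal B_I(\bar r_X,\underline c,\bar c)$ is the set of $b\in\mathbb R$ for which there exists a random vector $(\tilde Y,\tilde X,\tilde W_1,\tilde W_2)$ with $(\tilde Y,\tilde X,\tilde W_1)$ equal in distribution to $(Y,X,W_1)$, $\tilde W_2$ scalar with $\operatorname{var}(\tilde W_2)=1$, satisfying (A1), (A-rx), (A-c), and whose $\beta_{\text{long}}$ equals $b$. *)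

theory Defs
  imports "HOL-Probability.Probability"
begin

definition mean :: "'a measure \<Rightarrow> ('a \<Rightarrow> real) \<Rightarrow> real" where
  "mean M f = integral\<^sup>L M f"

definition cov :: "'a measure \<Rightarrow> ('a \<Rightarrow> real) \<Rightarrow> ('a \<Rightarrow> real) \<Rightarrow> real" where
  "cov M f g = mean M (\<lambda>\<omega>. (f \<omega> - mean M f) * (g \<omega> - mean M g))"

definition varm :: "'a measure \<Rightarrow> ('a \<Rightarrow> real) \<Rightarrow> real" where
  "varm M f = cov M f f"

definition second_moment :: "'a measure \<Rightarrow> ('a \<Rightarrow> real) \<Rightarrow> bool" where
  "second_moment M f \<longleftrightarrow> f \<in> borel_measurable M \<and> integrable M (\<lambda>\<omega>. (f \<omega>)\<^sup>2)"

text \<open>A random vector is represented as a finite family of real random variables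
  indexed by a finite type 'i.  var(B) and cov(B,A):\<close>
definition covmat :: "'a measure \<Rightarrow> ('i::finite \<Rightarrow> 'a \<Rightarrow> real) \<Rightarrow> real^'i^'i" where
  "covmat M Z = (\<chi> i j. cov M (Z i) (Z j))"

definition covvec :: "'a measure \<Rightarrow> ('i::finite \<Rightarrow> 'a \<Rightarrow> real) \<Rightarrow> ('a \<Rightarrow> real) \<Rightarrow> real^'i" where
  "covvec M Z f = (\<chi> i. cov M (Z i) f)"

definition posdef :: "real^'i^'i \<Rightarrow> bool" where
  "posdef A \<longleftrightarrow> (\<forall>v. v \<noteq> 0 \<longrightarrow> v \<bullet> (A *v v) > 0)"

text \<open>Slope coefficients of the linear projection of f on (1, Z):
  var(Z)^{-1} cov(Z, f).\<close>
definition proj_coef :: "'a measure \<Rightarrow> ('i::finite \<Rightarrow> 'a \<Rightarrow> real) \<Rightarrow> ('a \<Rightarrow> real) \<Rightarrow> real^'i" where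
  "proj_coef M Z f = matrix_inv (covmat M Z) *v covvec M Z f"

definition perp :: "'a measure \<Rightarrow> ('a \<Rightarrow> real) \<Rightarrow> ('i::finite \<Rightarrow> 'a \<Rightarrow> real) \<Rightarrow> 'a \<Rightarrow> real" where
  "perp M f Z = (\<lambda>\<omega>. f \<omega> - covvec M Z f \<bullet> (matrix_inv (covmat M Z) *v (\<chi> i. Z i \<omega>)))"

definition rsq :: "'a measure \<Rightarrow> ('a \<Rightarrow> real) \<Rightarrow> ('i::finite \<Rightarrow> 'a \<Rightarrow> real) \<Rightarrow> real" where
  "rsq M f Z = varm M (\<lambda>\<omega>. proj_coef M Z f \<bullet> (\<chi> i. Z i \<omega>)) / varm M f"

datatype 'd idx_XW = iX | iW 'd
datatype 'd idx_WW = jW1 'd | jW2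
datatype 'd idx_XWW = kX | kW1 'd | kW2
datatype 'd idx_YXW = lY | lX | lW 'd
datatype 'd idx_YXWW = mY | mX | mW1 'd | mW2

instance idx_XW :: (finite) finite
proof
  have "(UNIV :: 'a idx_XW set) = insert iX (range iW)"
    by (auto, case_tac x, auto)
  then show "finite (UNIV :: 'a idx_XW set)" by (metis finite_imageI finite_insert finite_class.finite_UNIV)
qed

instance idx_WW :: (finite) finite
proof
  have "(UNIV :: 'a idx_WW set) = insert jW2 (range jW1)"
    by (auto, case_tac x, auto)
  then show "finite (UNIV :: 'a idx_WW set)" by (metis finite_imageI finite_insert finite_class.finite_UNIV)
qed

instance idx_XWW :: (finite) finite
proof
  have "(UNIV :: 'a idx_XWW set) = insert kX (insert kW2 (range kW1))"
    by (auto, case_tac x, auto)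
  then show "finite (UNIV :: 'a idx_XWW set)" by (metis finite_imageI finite_insert finite_class.finite_UNIV)
qed

instance idx_YXW :: (finite) finite
proof
  have "(UNIV :: 'a idx_YXW set) = insert lY (insert lX (range lW))"
    by (auto, case_tac x, auto)
  then show "finite (UNIV :: 'a idx_YXW set)" by (metis finite_imageI finite_insert finite_class.finite_UNIV)
qed

instance idx_YXWW :: (finite) finite
proof
  have "(UNIV :: 'a idx_YXWW set) = insert mY (insert mX (insert mW2 (range mW1)))"
    by (auto, case_tac x, auto)
  then show "finite (UNIV :: 'a idx_YXWW set)" by (metis finite_imageI finite_insert finite_class.finite_UNIV)
qed

text \<open>Components of W1 (a random vector in R^d1, d1 = CARD('d)).\<close>
definition wfam :: "('a \<Rightarrow> real^'d) \<Rightarrow> 'd \<Rightarrow> 'a \<Rightarrow> real" where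
  "wfam W = (\<lambda>i \<omega>. W \<omega> $ i)"

definition fam_XW :: "('a \<Rightarrow> real) \<Rightarrow> ('a \<Rightarrow> real^'d) \<Rightarrow> 'd idx_XW \<Rightarrow> 'a \<Rightarrow> real" where
  "fam_XW X W = (\<lambda>k. case k of iX \<Rightarrow> X | iW i \<Rightarrow> (\<lambda>\<omega>. W \<omega> $ i))"

definition fam_WW :: "('a \<Rightarrow> real^'d) \<Rightarrow> ('a \<Rightarrow> real) \<Rightarrow> 'd idx_WW \<Rightarrow> 'a \<Rightarrow> real" where
  "fam_WW W W2 = (\<lambda>k. case k of jW1 i \<Rightarrow> (\<lambda>\<omega>. W \<omega> $ i) | jW2 \<Rightarrow> W2)"

definition fam_XWW :: "('a \<Rightarrow> real) \<Rightarrow> ('a \<Rightarrow> real^'d) \<Rightarrow> ('a \<Rightarrow> real) \<Rightarrow> 'd idx_XWW \<Rightarrow> 'a \<Rightarrow> real" where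
  "fam_XWW X W W2 = (\<lambda>k. case k of kX \<Rightarrow> X | kW1 i \<Rightarrow> (\<lambda>\<omega>. W \<omega> $ i) | kW2 \<Rightarrow> W2)"

definition fam_YXW :: "('a \<Rightarrow> real) \<Rightarrow> ('a \<Rightarrow> real) \<Rightarrow> ('a \<Rightarrow> real^'d) \<Rightarrow> 'd idx_YXW \<Rightarrow> 'a \<Rightarrow> real" where
  "fam_YXW Y X W = (\<lambda>k. case k of lY \<Rightarrow> Y | lX \<Rightarrow> X | lW i \<Rightarrow> (\<lambda>\<omega>. W \<omega> $ i))"

definition fam_YXWW :: "('a \<Rightarrow> real) \<Rightarrow> ('a \<Rightarrow> real) \<Rightarrow> ('a \<Rightarrow> real^'d) \<Rightarrow> ('a \<Rightarrow> real) \<Rightarrow> 'd idx_YXWW \<Rightarrow> 'a \<Rightarrow> real" where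
  "fam_YXWW Y X W W2 = (\<lambda>k. case k of mY \<Rightarrow> Y | mX \<Rightarrow> X | mW1 i \<Rightarrow> (\<lambda>\<omega>. W \<omega> $ i) | mW2 \<Rightarrow> W2)"

definition beta_long :: "'a measure \<Rightarrow> ('a \<Rightarrow> real) \<Rightarrow> ('a \<Rightarrow> real) \<Rightarrow> ('a \<Rightarrow> real^'d) \<Rightarrow> ('a \<Rightarrow> real) \<Rightarrow> real" where
  "beta_long M Y X W W2 = proj_coef M (fam_XWW X W W2) Y $ kX"

definition beta_med :: "'a measure \<Rightarrow> ('a \<Rightarrow> real) \<Rightarrow> ('a \<Rightarrow> real) \<Rightarrow> ('a \<Rightarrow> real^'d) \<Rightarrow> real" where
  "beta_med M Y X W = proj_coef M (fam_XW X W) Y $ iX"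

definition pi1 :: "'a measure \<Rightarrow> ('a \<Rightarrow> real) \<Rightarrow> ('a \<Rightarrow> real^'d) \<Rightarrow> ('a \<Rightarrow> real) \<Rightarrow> real^'d" where
  "pi1 M X W W2 = (\<chi> i. proj_coef M (fam_WW W W2) X $ jW1 i)"

definition pi2 :: "'a measure \<Rightarrow> ('a \<Rightarrow> real) \<Rightarrow> ('a \<Rightarrow> real^'d) \<Rightarrow> ('a \<Rightarrow> real) \<Rightarrow> real" where
  "pi2 M X W W2 = proj_coef M (fam_WW W W2) X $ jW2"

definition R_W2_W1 :: "'a measure \<Rightarrow> ('a \<Rightarrow> real^'d) \<Rightarrow> ('a \<Rightarrow> real) \<Rightarrow> real" where
  "R_W2_W1 M W W2 = sqrt ((covvec M (wfam W) W2 \<bullet> (matrix_inv (covmat M (wfam W)) *v covvec M (wfam W) W2))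
                          / varm M W2)"

definition A1 :: "'a measure \<Rightarrow> ('a \<Rightarrow> real) \<Rightarrow> ('a \<Rightarrow> real) \<Rightarrow> ('a \<Rightarrow> real^'d) \<Rightarrow> ('a \<Rightarrow> real) \<Rightarrow> bool" where
  "A1 M Y X W W2 \<longleftrightarrow> posdef (covmat M (fam_YXWW Y X W W2))"

definition A_rx :: "real \<Rightarrow> 'a measure \<Rightarrow> ('a \<Rightarrow> real) \<Rightarrow> ('a \<Rightarrow> real^'d) \<Rightarrow> ('a \<Rightarrow> real) \<Rightarrow> bool" where
  "A_rx r M X W W2 \<longleftrightarrow>
     sqrt (varm M (\<lambda>\<omega>. pi2 M X W W2 * W2 \<omega>)) \<le> r * sqrt (varm M (\<lambda>\<omega>. pi1 M X W W2 \<bullet> W \<omega>))"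

definition A_c :: "real \<Rightarrow> real \<Rightarrow> 'a measure \<Rightarrow> ('a \<Rightarrow> real^'d) \<Rightarrow> ('a \<Rightarrow> real) \<Rightarrow> bool" where
  "A_c cl ch M W W2 \<longleftrightarrow> cl \<le> R_W2_W1 M W W2 \<and> R_W2_W1 M W W2 \<le> ch"

text \<open>A candidate random vector (Y~, X~, W1~, W2~) is represented by its law N, a
  Borel probability measure on R x R x R^d1 x R, with the coordinate projections
  as the random variables.\<close>
definition cY :: "real \<times> real \<times> (real^'d) \<times> real \<Rightarrow> real" where "cY = (\<lambda>(y,x,w,v). y)"
definition cX :: "real \<times> real \<times> (real^'d) \<times> real \<Rightarrow> real" where "cX = (\<lambda>(y,x,w,v). x)"
definition cW1 :: "real \<times> real \<times> (real^'d) \<times> real \<Rightarrow> real^'d" where "cW1 = (\<lambda>(y,x,w,v). w)"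
definition cW2 :: "real \<times> real \<times> (real^'d) \<times> real \<Rightarrow> real" where "cW2 = (\<lambda>(y,x,w,v). v)"

definition B_I :: "'a measure \<Rightarrow> ('a \<Rightarrow> real) \<Rightarrow> ('a \<Rightarrow> real) \<Rightarrow> ('a \<Rightarrow> real^'d)
                    \<Rightarrow> real \<Rightarrow> real \<Rightarrow> real \<Rightarrow> real set" where
  "B_I M Y X W r cl ch = {b. \<exists>N :: (real \<times> real \<times> (real^'d) \<times> real) measure.
      prob_space N \<and> sets N = sets borel \<and>
      second_moment N cY \<and> second_moment N cX \<and> (\<forall>i. second_moment N (\<lambda>\<omega>. cW1 \<omega> $ i)) \<and>
      second_moment N cW2 \<and>
      distr N borel (\<lambda>\<omega>. (cY \<omega>, cX \<omega>, cW1 \<omega>)) = distr M borel (\<lambda>\<omega>. (Y \<omega>, X \<omega>, W \<omega>)) \<and>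
      varm N cW2 = 1 \<and>
      A1 N cY cX cW1 cW2 \<and> A_rx r N cX cW1 cW2 \<and> A_c cl ch N cW1 cW2 \<and>
      beta_long N cY cX cW1 cW2 = b}"

end

theory Submission
  imports Defs
begin

text \<open>Partial out \<open>W\<^sub>1\<close> everywhere (Frisch--Waugh--Lovell). With \<open>V\<^sub>x = var(\<pi>'W\<^sub>1)\<close> for the
  projection of \<open>X\<close> on \<open>W\<^sub>1\<close>, \<open>v\<^sub>y = var(Y\<^sup>\<bottom>\<^sup>W\<^sup>1)\<close> and \<open>g = cov(Y\<^sup>\<bottom>\<^sup>W\<^sup>1, X\<^sup>\<bottom>\<^sup>W\<^sup>1) \<ge> 0\<close>, the claimed
  value is \<open>\<surd>(g\<^sup>2 / (V\<^sub>x v\<^sub>y + g\<^sup>2))\<close>. Lower bound: \<open>\<beta>\<^sub>l\<^sub>o\<^sub>n\<^sub>g \<le> 0\<close> forces \<open>g\<^sup>2 \<le> v\<^sub>y A\<close> (Cauchy--Schwarz),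
  where \<open>A = \<pi>\<^sub>2\<^sup>2 var(W\<^sub>2\<^sup>\<bottom>\<^sup>W\<^sup>1)\<close> is the part of \<open>var(X\<^sup>\<bottom>\<^sup>W\<^sup>1)\<close> explained by \<open>W\<^sub>2\<close>, while (A-rx) together
  with \<open>var W\<^sub>2 = 1\<close> forces \<open>A \<le> r\<^sup>2 (V\<^sub>x + A)\<close>. Sharpness: for every larger \<open>r\<close> the variable
  \<open>W\<^sub>2 = \<alpha> Y\<^sup>\<bottom>\<^sup>W\<^sup>1 + b X\<^sup>\<bottom>\<^sup>W\<^sup>1 + \<delta> \<pi>'W\<^sub>1 + \<sigma> Z\<close>, with \<open>Z\<close> an independent Rademacher sign, can be
  tuned to give \<open>\<beta>\<^sub>l\<^sub>o\<^sub>n\<^sub>g = 0\<close>; the noise \<open>\<sigma> > 0\<close> keeps the covariance matrix positive definite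
  at the price of an arbitrarily small increase of \<open>r\<close>.\<close>

lemma cov_sym: "cov M f g = cov M g f"
  unfolding cov_def by (simp add: mult.commute)

lemma covmat_transpose: "transpose (covmat M Z) = covmat M Z"
  by (simp add: covmat_def transpose_def cov_sym vec_eq_iff)

context prob_space
begin

lemma second_moment_measurable [measurable_dest]: "second_moment M f \<Longrightarrow> f \<in> borel_measurable M"
  by (simp add: second_moment_def)

lemma second_moment_integrable: "second_moment M f \<Longrightarrow> integrable M f"
  by (rule square_integrable_imp_integrable) (auto simp: second_moment_def)

lemma second_moment_integrable_mult:
  assumes "second_moment M f" "second_moment M g"
  shows "integrable M (\<lambda>x. f x * g x)"
proof (rule Bochner_Integration.integrable_bound)
  show "integrable M (\<lambda>x. (f x)\<^sup>2 + (g x)\<^sup>2)"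
    using assms by (auto simp: second_moment_def)
  show "AE x in M. norm (f x * g x) \<le> norm ((f x)\<^sup>2 + (g x)\<^sup>2)"
  proof (intro AE_I2)
    fix x
    have "2 * \<bar>f x * g x\<bar> \<le> (f x)\<^sup>2 + (g x)\<^sup>2"
      using sum_squares_bound[of "\<bar>f x\<bar>" "\<bar>g x\<bar>"] by (simp add: abs_mult)
    then show "norm (f x * g x) \<le> norm ((f x)\<^sup>2 + (g x)\<^sup>2)"
      by simp
  qed
qed (use assms in auto)

lemma second_moment_add [simp]:
  assumes "second_moment M f" "second_moment M g"
  shows "second_moment M (\<lambda>x. f x + g x)"
proof -
  have "integrable M (\<lambda>x. (f x)\<^sup>2 + (g x)\<^sup>2 + 2 * (f x * g x))"
    using assms second_moment_integrable_mult by (auto simp: second_moment_def)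
  then show ?thesis
    using assms by (simp add: second_moment_def power2_sum mult.assoc borel_measurable_add)
qed

lemma second_moment_scale [simp]: "second_moment M f \<Longrightarrow> second_moment M (\<lambda>x. c * f x)"
  by (auto simp: second_moment_def power_mult_distrib)

lemma second_moment_const [simp]: "second_moment M (\<lambda>x. c)"
  by (auto simp: second_moment_def)

lemma second_moment_diff [simp]:
  assumes "second_moment M f" "second_moment M g"
  shows "second_moment M (\<lambda>x. f x - g x)"
  using second_moment_add[OF assms(1) second_moment_scale[OF assms(2), of "-1"]] by simp

lemma second_moment_sum [simp]:
  "(\<And>i. i \<in> S \<Longrightarrow> second_moment M (f i)) \<Longrightarrow> second_moment M (\<lambda>x. \<Sum>i\<in>S. f i x)"
  by (induction S rule: infinite_finite_induct) simp_all

lemma second_moment_inner [simp]: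
  "(\<And>k. second_moment M (Z k)) \<Longrightarrow> second_moment M (\<lambda>x. a \<bullet> (\<chi> k. Z k x))"
  by (simp add: inner_vec_def)

lemma cov_eq_expectation:
  assumes "second_moment M f" "second_moment M g"
  shows "cov M f g = expectation (\<lambda>x. f x * g x) - expectation f * expectation g"
proof -
  have "cov M f g = expectation (\<lambda>x. f x * g x - expectation f * g x - expectation g * f x
                                       + expectation f * expectation g)"
    unfolding cov_def mean_def by (rule arg_cong[where f=expectation]) (auto simp: algebra_simps)
  then show ?thesis
    using assms by (simp add: second_moment_integrable second_moment_integrable_mult prob_space)
qed

lemma cov_add_left:
  assumes "second_moment M f" "second_moment M g" "second_moment M h"
  shows "cov M (\<lambda>x. f x + g x) h = cov M f h + cov M g h"
  using assms
  by (simp add: cov_eq_expectation second_moment_integrable second_moment_integrable_mult algebra_simps)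

lemma cov_scale_left:
  assumes "second_moment M f" "second_moment M h"
  shows "cov M (\<lambda>x. c * f x) h = c * cov M f h"
  using assms
  by (simp add: cov_eq_expectation second_moment_integrable second_moment_integrable_mult algebra_simps)

lemma cov_const_left: "second_moment M h \<Longrightarrow> cov M (\<lambda>x. c) h = 0"
  by (simp add: cov_eq_expectation second_moment_integrable prob_space)

lemma cov_add_right:
  "\<lbrakk>second_moment M f; second_moment M g; second_moment M h\<rbrakk>
     \<Longrightarrow> cov M h (\<lambda>x. f x + g x) = cov M h f + cov M h g"
  using cov_add_left by (simp add: cov_sym)

lemma cov_scale_right:
  "\<lbrakk>second_moment M f; second_moment M h\<rbrakk> \<Longrightarrow> cov M h (\<lambda>x. c * f x) = c * cov M h f"
  using cov_scale_left by (simp add: cov_sym)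

lemma cov_diff_left:
  assumes "second_moment M f" "second_moment M g" "second_moment M h"
  shows "cov M (\<lambda>x. f x - g x) h = cov M f h - cov M g h"
  using cov_add_left[OF assms(1) second_moment_scale[OF assms(2), of "-1"] assms(3)]
    cov_scale_left[OF assms(2,3), of "-1"]
  by simp

lemma cov_diff_right:
  "\<lbrakk>second_moment M f; second_moment M g; second_moment M h\<rbrakk>
     \<Longrightarrow> cov M h (\<lambda>x. f x - g x) = cov M h f - cov M h g"
  using cov_diff_left by (simp add: cov_sym)

lemma cov_sum_left:
  assumes "\<And>i. i \<in> S \<Longrightarrow> second_moment M (f i)" "second_moment M h"
  shows "cov M (\<lambda>x. \<Sum>i\<in>S. f i x) h = (\<Sum>i\<in>S. cov M (f i) h)"
  using assms(1)
proof (induction S rule: infinite_finite_induct)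
  case (insert i S)
  then show ?case
    using assms(2) cov_add_left[of "f i" "\<lambda>x. \<Sum>i\<in>S. f i x" h] by simp
qed (simp_all add: assms(2) cov_const_left)

lemma varm_nonneg: "0 \<le> varm M f"
  unfolding varm_def cov_def mean_def by (rule integral_nonneg_AE) simp

lemma varm_scale: "second_moment M f \<Longrightarrow> varm M (\<lambda>x. c * f x) = c\<^sup>2 * varm M f"
  by (simp add: varm_def cov_scale_left cov_scale_right power2_eq_square)

lemma varm_diff_scale:
  assumes "second_moment M f" "second_moment M g"
  shows "varm M (\<lambda>x. f x - t * g x) = varm M f - 2 * t * cov M f g + t\<^sup>2 * varm M g"
  using assms unfolding varm_def
  by (simp add: cov_diff_left cov_diff_right cov_scale_left cov_scale_right cov_sym[of M g f]
      power2_eq_square algebra_simps)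

lemma gram_det_pos:
  assumes "second_moment M f" "second_moment M g" "0 < varm M g"
    and "\<And>t. 0 < varm M (\<lambda>x. f x - t * g x)"
  shows "0 < varm M f * varm M g - (cov M f g)\<^sup>2"
proof -
  define t where "t = cov M f g / varm M g"
  have "0 < varm M f - 2 * t * cov M f g + t\<^sup>2 * varm M g"
    using assms(4)[of t] varm_diff_scale[OF assms(1,2)] by simp
  also have "\<dots> = (varm M f * varm M g - (cov M f g)\<^sup>2) / varm M g"
    using assms(3) by (simp add: t_def power2_eq_square field_simps)
  finally show ?thesis
    using assms(3) by (simp add: zero_less_divide_iff)
qed

lemma cov_Cauchy_Schwarz:
  assumes "second_moment M f" "second_moment M g"
  shows "(cov M f g)\<^sup>2 \<le> varm M f * varm M g"
proof (cases "varm M g = 0")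
  case True
  have "cov M f g = 0"
  proof (rule ccontr)
    assume c: "cov M f g \<noteq> 0"
    define t where "t = (varm M f + 1) / (2 * cov M f g)"
    have "0 \<le> varm M (\<lambda>x. f x - t * g x)" by (rule varm_nonneg)
    also have "\<dots> = -1"
      using varm_diff_scale[OF assms, of t] True c by (simp add: t_def field_simps)
    finally show False by simp
  qed
  then show ?thesis by (simp add: True)
next
  case False
  then have pos: "0 < varm M g" using varm_nonneg[of g] by simp
  define t where "t = cov M f g / varm M g"
  have "0 \<le> varm M (\<lambda>x. f x - t * g x)" by (rule varm_nonneg)
  also have "\<dots> = varm M f - (cov M f g)\<^sup>2 / varm M g"
    using varm_diff_scale[OF assms, of t] pos by (simp add: t_def power2_eq_square field_simps)
  finally show ?thesis using pos by (simp add: field_simps)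
qed

lemma cov_inner_left:
  assumes "\<And>k. second_moment M (Z k)" "second_moment M h"
  shows "cov M (\<lambda>x. a \<bullet> (\<chi> k. Z k x)) h = a \<bullet> covvec M Z h"
proof -
  have "cov M (\<lambda>x. a \<bullet> (\<chi> k. Z k x)) h = (\<Sum>k\<in>UNIV. cov M (\<lambda>x. a $ k * Z k x) h)"
    unfolding inner_vec_def using assms by (simp add: cov_sum_left)
  then show ?thesis
    using assms by (simp add: cov_scale_left inner_vec_def covvec_def)
qed

lemma cov_inner_right:
  "\<lbrakk>\<And>k. second_moment M (Z k); second_moment M h\<rbrakk>
     \<Longrightarrow> cov M h (\<lambda>x. a \<bullet> (\<chi> k. Z k x)) = a \<bullet> covvec M Z h"
  using cov_inner_left[of Z h a] by (simp add: cov_sym)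

lemma covvec_inner:
  assumes "\<And>k. second_moment M (Z k)"
  shows "covvec M Z (\<lambda>x. a \<bullet> (\<chi> k. Z k x)) = covmat M Z *v a"
  using cov_inner_right[OF assms assms, of _ a]
  by (simp add: vec_eq_iff covvec_def matrix_vector_mult_def covmat_def inner_vec_def
      cov_sym mult.commute)

lemma varm_inner:
  "(\<And>k. second_moment M (Z k)) \<Longrightarrow> varm M (\<lambda>x. a \<bullet> (\<chi> k. Z k x)) = a \<bullet> (covmat M Z *v a)"
  unfolding varm_def by (simp add: cov_inner_left covvec_inner)

end

lemma matrix_inv_mult:
  assumes "invertible A"
  shows "A ** matrix_inv A = mat 1" "matrix_inv A ** A = mat 1"
proof -
  have "A ** matrix_inv A = mat 1 \<and> matrix_inv A ** A = mat 1"
    using assms unfolding matrix_inv_def invertible_def by (rule someI_ex)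
  then show "A ** matrix_inv A = mat 1" "matrix_inv A ** A = mat 1" by auto
qed

lemma posdef_invertible:
  assumes "posdef A"
  shows "invertible A"
proof -
  have "\<forall>x. A *v x = 0 \<longrightarrow> x = 0"
    using assms unfolding posdef_def by (metis inner_zero_right less_irrefl)
  then obtain B where B: "B ** A = mat 1" using matrix_left_invertible_ker by blast
  then have "A ** B = mat 1" using matrix_left_right_inverse by blast
  with B show ?thesis unfolding invertible_def by blast
qed

context prob_space
begin

lemma covmat_mult_proj_coef:
  "invertible (covmat M Z) \<Longrightarrow> covmat M Z *v proj_coef M Z f = covvec M Z f"
  by (simp add: proj_coef_def matrix_vector_mul_assoc matrix_inv_mult)

lemma cov_proj_residual:
  assumes "invertible (covmat M Z)" "\<And>k. second_moment M (Z k)" "second_moment M f"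
  shows "cov M (Z i) (\<lambda>x. f x - proj_coef M Z f \<bullet> (\<chi> k. Z k x)) = 0"
proof -
  have "cov M (Z i) (\<lambda>x. proj_coef M Z f \<bullet> (\<chi> k. Z k x))
        = covvec M Z (\<lambda>x. proj_coef M Z f \<bullet> (\<chi> k. Z k x)) $ i"
    by (simp add: covvec_def)
  also have "\<dots> = cov M (Z i) f"
    using assms by (simp only: covvec_inner covmat_mult_proj_coef) (simp add: covvec_def)
  finally show ?thesis
    using assms by (simp add: cov_diff_right)
qed

lemma proj_coef_unique:
  assumes "invertible (covmat M Z)" "\<And>k. second_moment M (Z k)" "second_moment M f"
    and "\<And>i. cov M (Z i) (\<lambda>x. f x - q \<bullet> (\<chi> k. Z k x)) = 0"
  shows "proj_coef M Z f = q"
proof -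
  have "covvec M Z f = covvec M Z (\<lambda>x. q \<bullet> (\<chi> k. Z k x))"
    using assms(2-4) by (simp add: covvec_def vec_eq_iff cov_diff_right)
  also have "\<dots> = covmat M Z *v q"
    using assms by (simp add: covvec_inner)
  finally show ?thesis
    using assms(1) by (simp add: proj_coef_def matrix_vector_mul_assoc matrix_inv_mult)
qed

lemma perp_eq_proj_residual:
  assumes "invertible (covmat M Z)"
  shows "perp M f Z = (\<lambda>x. f x - proj_coef M Z f \<bullet> (\<chi> k. Z k x))"
proof -
  have "covvec M Z f \<bullet> (matrix_inv (covmat M Z) *v z) = proj_coef M Z f \<bullet> z" for z
  proof -
    have "covvec M Z f = proj_coef M Z f v* covmat M Z"
      using covmat_mult_proj_coef[OF assms, of f] covmat_transpose[of M Z]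
      by (metis transpose_matrix_vector)
    then show ?thesis
      using assms by (simp add: dot_lmul_matrix matrix_vector_mul_assoc matrix_inv_mult)
  qed
  then show ?thesis by (simp add: perp_def)
qed

lemma posdef_varm_pos:
  "\<lbrakk>posdef (covmat M Z); \<And>k. second_moment M (Z k); v \<noteq> 0\<rbrakk>
     \<Longrightarrow> 0 < varm M (\<lambda>x. v \<bullet> (\<chi> k. Z k x))"
  by (simp add: varm_inner posdef_def)

lemma posdef_covmat_reindex:
  fixes g :: "'j::finite \<Rightarrow> 'i::finite" and Z :: "'i \<Rightarrow> 'a \<Rightarrow> real"
  assumes "posdef (covmat M Z)" "\<And>k. second_moment M (Z k)" "inj g"
  shows "posdef (covmat M (\<lambda>j. Z (g j)))"
  unfolding posdef_def
proof (intro allI impI)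
  fix v :: "real^'j"
  assume v: "v \<noteq> 0"
  define u where "u = (\<chi> i. if i \<in> range g then v $ inv g i else 0)"
  have ug: "u $ g j = v $ j" for j
    using assms(3) by (simp add: u_def)
  then have "u \<noteq> 0"
    using v by (metis vec_eq_iff zero_index)
  have "v \<bullet> (\<chi> j. Z (g j) x) = u \<bullet> (\<chi> i. Z i x)" for x
  proof -
    have "u \<bullet> (\<chi> i. Z i x) = (\<Sum>i\<in>range g. u $ i * Z i x)"
      unfolding inner_vec_def by (simp, rule sum.mono_neutral_right) (auto simp: u_def)
    also have "\<dots> = (\<Sum>j\<in>UNIV. v $ j * Z (g j) x)"
      using assms(3) by (simp add: sum.reindex ug)
    finally show ?thesis by (simp add: inner_vec_def)
  qed
  then have "v \<bullet> (covmat M (\<lambda>j. Z (g j)) *v v) = varm M (\<lambda>x. u \<bullet> (\<chi> i. Z i x))"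
    using assms(2) by (simp add: varm_inner[symmetric])
  then show "0 < v \<bullet> (covmat M (\<lambda>j. Z (g j)) *v v)"
    using posdef_varm_pos[OF assms(1,2) \<open>u \<noteq> 0\<close>] by simp
qed

end

section \<open>Partialling out \<open>W\<^sub>1\<close>\<close>

lemma UNIV_idx_XW: "(UNIV :: 'd idx_XW set) = insert iX (range iW)"
  by (rule set_eqI, case_tac x) auto

lemma UNIV_idx_WW: "(UNIV :: 'd idx_WW set) = insert jW2 (range jW1)"
  by (rule set_eqI, case_tac x) auto

lemma UNIV_idx_XWW: "(UNIV :: 'd idx_XWW set) = insert kX (insert kW2 (range kW1))"
  by (rule set_eqI, case_tac x) auto

lemma UNIV_idx_YXW: "(UNIV :: 'd idx_YXW set) = insert lY (insert lX (range lW))"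
  by (rule set_eqI, case_tac x) auto

lemma UNIV_idx_YXWW: "(UNIV :: 'd idx_YXWW set) = insert mY (insert mX (insert mW2 (range mW1)))"
  by (rule set_eqI, case_tac x) auto

lemma inner_fam_XW: "v \<bullet> (\<chi> k. fam_XW X W k x) = v $ iX * X x + (\<chi> i. v $ iW i) \<bullet> W x"
  by (simp add: inner_vec_def UNIV_idx_XW sum.reindex inj_on_def image_iff fam_XW_def)

lemma inner_fam_WW: "v \<bullet> (\<chi> k. fam_WW W W2 k x) = (\<chi> i. v $ jW1 i) \<bullet> W x + v $ jW2 * W2 x"
  by (simp add: inner_vec_def UNIV_idx_WW sum.reindex inj_on_def image_iff fam_WW_def add_ac)

lemma inner_fam_XWW:
  "v \<bullet> (\<chi> k. fam_XWW X W W2 k x) = v $ kX * X x + (\<chi> i. v $ kW1 i) \<bullet> W x + v $ kW2 * W2 x"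
  by (simp add: inner_vec_def UNIV_idx_XWW sum.reindex inj_on_def image_iff fam_XWW_def add_ac)

lemma inner_fam_YXW:
  "v \<bullet> (\<chi> k. fam_YXW Y X W k x) = v $ lY * Y x + v $ lX * X x + (\<chi> i. v $ lW i) \<bullet> W x"
  by (simp add: inner_vec_def UNIV_idx_YXW sum.reindex inj_on_def image_iff fam_YXW_def add_ac)

lemma inner_fam_YXWW:
  "v \<bullet> (\<chi> k. fam_YXWW Y X W W2 k x)
     = v $ mY * Y x + v $ mX * X x + (\<chi> i. v $ mW1 i) \<bullet> W x + v $ mW2 * W2 x"
  by (simp add: inner_vec_def UNIV_idx_YXWW sum.reindex inj_on_def image_iff fam_YXWW_def add_ac)

lemma chi_wfam [simp]: "(\<chi> k. wfam W k x) = W x"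
  by (simp add: wfam_def)

definition wcoef :: "'a measure \<Rightarrow> ('a \<Rightarrow> real^'d::finite) \<Rightarrow> ('a \<Rightarrow> real) \<Rightarrow> real^'d" where
  "wcoef M W f = proj_coef M (wfam W) f"

definition wresid :: "'a measure \<Rightarrow> ('a \<Rightarrow> real^'d::finite) \<Rightarrow> ('a \<Rightarrow> real) \<Rightarrow> 'a \<Rightarrow> real" where
  "wresid M W f = (\<lambda>x. f x - wcoef M W f \<bullet> W x)"

locale partial_out = prob_space M for M :: "'a measure" +
  fixes W :: "'a \<Rightarrow> real^'d::finite"
  assumes second_moment_W: "\<And>i. second_moment M (\<lambda>x. W x $ i)"
    and posdef_W: "posdef (covmat M (wfam W))"
begin

lemma second_moment_wfam: "second_moment M (wfam W k)"
  using second_moment_W by (simp add: wfam_def)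

lemma invertible_covmat_W: "invertible (covmat M (wfam W))"
  using posdef_W by (rule posdef_invertible)

lemma second_moment_inner_W [simp]: "second_moment M (\<lambda>x. a \<bullet> W x)"
  using second_moment_inner[of "wfam W" a, OF second_moment_wfam] by simp

lemma second_moment_wresid [simp]: "second_moment M f \<Longrightarrow> second_moment M (wresid M W f)"
  by (simp add: wresid_def)

lemma cov_inner_W_left:
  "second_moment M h \<Longrightarrow> cov M (\<lambda>x. a \<bullet> W x) h = a \<bullet> covvec M (wfam W) h"
  using cov_inner_left[of "wfam W" h a, OF second_moment_wfam] by simp

lemma cov_inner_W_eq_0:
  assumes "second_moment M h" "\<And>i. cov M (\<lambda>x. W x $ i) h = 0"
  shows "cov M (\<lambda>x. a \<bullet> W x) h = 0"
proof -
  have "covvec M (wfam W) h = 0"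
    using assms(2) by (simp add: covvec_def vec_eq_iff wfam_def)
  then show ?thesis using cov_inner_W_left[OF assms(1)] by simp
qed

lemma cov_W_wresid: "second_moment M f \<Longrightarrow> cov M (\<lambda>x. W x $ i) (wresid M W f) = 0"
  using cov_proj_residual[OF invertible_covmat_W second_moment_wfam, of f i]
  by (simp add: wresid_def wcoef_def wfam_def)

lemma cov_inner_W_wresid: "second_moment M f \<Longrightarrow> cov M (\<lambda>x. a \<bullet> W x) (wresid M W f) = 0"
  by (rule cov_inner_W_eq_0) (simp_all add: cov_W_wresid)

lemma cov_wresid_left:
  "\<lbrakk>second_moment M f; second_moment M g\<rbrakk>
     \<Longrightarrow> cov M (wresid M W g) (wresid M W f) = cov M g (wresid M W f)"
  unfolding wresid_def[of M W g] by (simp add: cov_diff_left cov_inner_W_wresid)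

lemma cov_wresid_eq_0:
  assumes "second_moment M e" "second_moment M h"
    and "\<And>i. cov M (\<lambda>x. W x $ i) e = 0" "cov M h e = 0"
  shows "cov M e (wresid M W h) = 0"
proof -
  have "cov M (wresid M W h) e = 0"
    using assms cov_inner_W_eq_0[OF assms(1,3)] by (simp add: wresid_def cov_diff_left)
  then show ?thesis by (simp add: cov_sym)
qed

lemma perp_eq_wresid: "perp M f (wfam W) = wresid M W f"
  using perp_eq_proj_residual[OF invertible_covmat_W] by (simp add: wresid_def wcoef_def)

lemma varm_fitted:
  assumes "second_moment M f"
  shows "varm M (\<lambda>x. wcoef M W f \<bullet> W x) = covvec M (wfam W) f \<bullet> wcoef M W f"
proof -
  have "varm M (\<lambda>x. wcoef M W f \<bullet> W x) = cov M (\<lambda>x. wcoef M W f \<bullet> W x) (\<lambda>x. f x - wresid M W f x)"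
    unfolding varm_def by (simp add: wresid_def)
  also have "\<dots> = cov M (\<lambda>x. wcoef M W f \<bullet> W x) f"
    using assms by (simp add: cov_diff_right cov_inner_W_wresid)
  finally show ?thesis
    using assms by (simp add: cov_inner_W_left) (rule inner_commute)
qed

lemma varm_fitted_plus_wresid:
  assumes "second_moment M f"
  shows "varm M f = varm M (\<lambda>x. wcoef M W f \<bullet> W x) + varm M (wresid M W f)"
proof -
  have "f = (\<lambda>x. wcoef M W f \<bullet> W x + wresid M W f x)"
    by (simp add: wresid_def)
  then have "varm M f = cov M (\<lambda>x. wcoef M W f \<bullet> W x + wresid M W f x)
                              (\<lambda>x. wcoef M W f \<bullet> W x + wresid M W f x)"
    unfolding varm_def by metis
  moreover have "cov M (wresid M W f) (\<lambda>x. wcoef M W f \<bullet> W x) = 0"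
    using cov_inner_W_wresid[OF assms] by (simp add: cov_sym)
  ultimately show ?thesis
    using assms cov_inner_W_wresid[OF assms]
    by (simp add: cov_add_left cov_add_right varm_def)
qed

end

definition rx_breakdown :: "real \<Rightarrow> real \<Rightarrow> real \<Rightarrow> real" where
  "rx_breakdown Vx vy g = sqrt (g\<^sup>2 / (Vx * vy + g\<^sup>2))"

locale observed_model = prob_space M for M :: "'a measure" +
  fixes Y X :: "'a \<Rightarrow> real" and W :: "'a \<Rightarrow> real^'d::finite"
  assumes second_moment_Y [simp]: "second_moment M Y"
    and second_moment_X [simp]: "second_moment M X"
    and second_moment_W1: "\<And>i. second_moment M (\<lambda>x. W x $ i)"
    and posdef_YXW: "posdef (covmat M (fam_YXW Y X W))"
begin

lemma second_moment_fam_YXW: "second_moment M (fam_YXW Y X W k)"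
  by (cases k) (simp_all add: fam_YXW_def second_moment_W1)

lemma posdef_covmat_W1: "posdef (covmat M (wfam W))"
proof -
  have "wfam W = (\<lambda>j. fam_YXW Y X W (lW j))"
    by (simp add: fun_eq_iff wfam_def fam_YXW_def)
  then show ?thesis
    using posdef_covmat_reindex[OF posdef_YXW second_moment_fam_YXW, of lW] by (simp add: inj_on_def)
qed

end

sublocale observed_model \<subseteq> partial_out M W
  by unfold_locales (simp_all add: second_moment_W1 posdef_covmat_W1)

context observed_model
begin

lemma posdef_covmat_XW: "posdef (covmat M (fam_XW X W))"
proof -
  define g where "g k = (case k of iX \<Rightarrow> lX | iW i \<Rightarrow> lW i)" for k :: "'d idx_XW"
  have "fam_XW X W = (\<lambda>j. fam_YXW Y X W (g j))"
    by (auto simp: fun_eq_iff fam_XW_def fam_YXW_def g_def split: idx_XW.splits)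
  moreover have "inj g" by (auto simp: inj_def g_def split: idx_XW.splits)
  ultimately show ?thesis
    using posdef_covmat_reindex[OF posdef_YXW second_moment_fam_YXW, of g] by simp
qed

lemma second_moment_fam_XW: "second_moment M (fam_XW X W k)"
  by (cases k) (simp_all add: fam_XW_def second_moment_W1)

lemma cov_wresid_eq_beta_med:
  "cov M (wresid M W Y) (wresid M W X) = beta_med M Y X W * varm M (wresid M W X)"
proof -
  define p where "p = proj_coef M (fam_XW X W) Y"
  define e where "e = (\<lambda>x. Y x - (p $ iX * X x + (\<chi> i. p $ iW i) \<bullet> W x))"
  have sm_e [simp]: "second_moment M e" by (simp add: e_def)
  have orth: "cov M (fam_XW X W k) e = 0" for k
    using cov_proj_residual[OF posdef_invertible[OF posdef_covmat_XW] second_moment_fam_XW, of Y k]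
    by (simp add: inner_fam_XW e_def p_def)
  have "cov M e (wresid M W X) = 0"
    using orth[of iX] orth[of "iW _"] by (intro cov_wresid_eq_0) (simp_all add: fam_XW_def)
  moreover have "Y = (\<lambda>x. p $ iX * X x + (\<chi> i. p $ iW i) \<bullet> W x + e x)"
    by (simp add: e_def)
  then have "cov M Y (wresid M W X)
      = cov M (\<lambda>x. p $ iX * X x + (\<chi> i. p $ iW i) \<bullet> W x + e x) (wresid M W X)"
    by simp
  ultimately have "cov M Y (wresid M W X) = p $ iX * cov M X (wresid M W X)"
    by (simp add: cov_add_left cov_scale_left cov_inner_W_wresid)
  then show ?thesis
    by (simp add: cov_wresid_left[symmetric] varm_def beta_med_def p_def)
qed

lemma varm_wresid_YX_pos:
  assumes "(s, t) \<noteq> (0, 0)"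
  shows "0 < varm M (\<lambda>x. s * wresid M W Y x + t * wresid M W X x)"
proof -
  define v :: "real^'d idx_YXW" where
    "v = (\<chi> k. case k of lY \<Rightarrow> s | lX \<Rightarrow> t | lW i \<Rightarrow> - s * wcoef M W Y $ i - t * wcoef M W X $ i)"
  have "v $ lY \<noteq> 0 \<or> v $ lX \<noteq> 0"
    using assms by (simp add: v_def)
  then have "v \<noteq> 0" by auto
  moreover have "(\<lambda>x. s * wresid M W Y x + t * wresid M W X x) = (\<lambda>x. v \<bullet> (\<chi> k. fam_YXW Y X W k x))"
    by (rule ext, subst inner_fam_YXW)
      (simp add: wresid_def v_def inner_vec_def algebra_simps sum_subtractf sum_distrib_left
        sum_negf)
  ultimately show ?thesis
    using posdef_varm_pos[OF posdef_YXW second_moment_fam_YXW] by simp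
qed

lemma varm_wresid_Y_pos: "0 < varm M (wresid M W Y)"
  using varm_wresid_YX_pos[of 1 0] by (simp add: fun_eq_iff)

lemma varm_wresid_X_pos: "0 < varm M (wresid M W X)"
  using varm_wresid_YX_pos[of 0 1] by (simp add: fun_eq_iff)

lemma gram_det_wresid_YX_pos:
  "0 < varm M (wresid M W Y) * varm M (wresid M W X) - (cov M (wresid M W Y) (wresid M W X))\<^sup>2"
proof (rule gram_det_pos)
  show "0 < varm M (\<lambda>x. wresid M W Y x - t * wresid M W X x)" for t
    using varm_wresid_YX_pos[of 1 "- t"] by simp
qed (simp_all add: varm_wresid_X_pos)

lemma varm_fitted_X_pos:
  assumes "covvec M (wfam W) X \<noteq> 0"
  shows "0 < varm M (\<lambda>x. wcoef M W X \<bullet> W x)"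
proof -
  have "wcoef M W X \<noteq> 0"
    using covmat_mult_proj_coef[OF invertible_covmat_W, of X] assms by (auto simp: wcoef_def)
  from posdef_varm_pos[OF posdef_W second_moment_wfam this] show ?thesis by simp
qed

lemma breakdown_formula_eq:
  assumes "covvec M (wfam W) X \<noteq> 0"
  shows "(let R2xw = rsq M X (wfam W);
              R2yxw = (beta_med M Y X W)\<^sup>2 * varm M (perp M X (wfam W)) / varm M (perp M Y (wfam W))
          in sqrt (R2yxw / (R2xw / (1 - R2xw) + R2yxw)))
       = rx_breakdown (varm M (\<lambda>x. wcoef M W X \<bullet> W x)) (varm M (wresid M W Y))
           (cov M (wresid M W Y) (wresid M W X))"
proof -
  define Vx where "Vx = varm M (\<lambda>x. wcoef M W X \<bullet> W x)"
  define vx where "vx = varm M (wresid M W X)"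
  define vy where "vy = varm M (wresid M W Y)"
  define g where "g = cov M (wresid M W Y) (wresid M W X)"
  have pos: "0 < Vx" "0 < vx" "0 < vy"
    using varm_fitted_X_pos[OF assms] varm_wresid_X_pos varm_wresid_Y_pos
    by (simp_all add: Vx_def vx_def vy_def)
  have rsq: "rsq M X (wfam W) = Vx / (Vx + vx)"
    unfolding rsq_def using varm_fitted_plus_wresid[OF second_moment_X]
    by (simp add: wcoef_def Vx_def vx_def)
  have beta: "beta_med M Y X W = g / vx"
    using cov_wresid_eq_beta_med pos by (simp add: g_def vx_def field_simps)
  have "(let R2xw = rsq M X (wfam W);
              R2yxw = (beta_med M Y X W)\<^sup>2 * varm M (perp M X (wfam W)) / varm M (perp M Y (wfam W))
          in sqrt (R2yxw / (R2xw / (1 - R2xw) + R2yxw)))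
      = sqrt (((g / vx)\<^sup>2 * vx / vy) / ((Vx / (Vx + vx)) / (1 - Vx / (Vx + vx)) + (g / vx)\<^sup>2 * vx / vy))"
    by (simp add: rsq beta perp_eq_wresid vx_def vy_def Let_def)
  also have "((g / vx)\<^sup>2 * vx / vy) / ((Vx / (Vx + vx)) / (1 - Vx / (Vx + vx)) + (g / vx)\<^sup>2 * vx / vy)
      = g\<^sup>2 / (Vx * vy + g\<^sup>2)"
  proof -
    have h1: "1 - Vx / (Vx + vx) = vx / (Vx + vx)"
      using pos by (simp add: field_simps)
    have h2: "(Vx / (Vx + vx)) / (vx / (Vx + vx)) = Vx / vx"
      using pos by (simp add: divide_divide_times_eq)
    have h3: "(g / vx)\<^sup>2 * vx / vy = g\<^sup>2 / (vx * vy)"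
      using pos by (simp add: field_simps power2_eq_square)
    show ?thesis
      unfolding h1 h2 h3 using pos by (simp add: field_simps)
  qed
  finally show ?thesis
    by (simp add: rx_breakdown_def Vx_def vy_def g_def)
qed

end

section \<open>The long regression and the lower bound\<close>

text \<open>The algebraic core of the lower bound: \<open>v\<^sub>y, v\<^sub>v\<close> are the variances of \<open>Y\<^sup>\<bottom>\<^sup>W\<^sup>1, W\<^sub>2\<^sup>\<bottom>\<^sup>W\<^sup>1\<close>,
  \<open>c\<^sub>x\<^sub>v, c\<^sub>y\<^sub>v\<close> the covariances of \<open>X\<^sup>\<bottom>\<^sup>W\<^sup>1, Y\<^sup>\<bottom>\<^sup>W\<^sup>1\<close> with \<open>W\<^sub>2\<^sup>\<bottom>\<^sup>W\<^sup>1\<close>, \<open>g = cov(Y\<^sup>\<bottom>\<^sup>W\<^sup>1, X\<^sup>\<bottom>\<^sup>W\<^sup>1)\<close>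
  and \<open>p = \<pi>\<^sub>2\<close>.\<close>
lemma sign_reversal_sq_le:
  fixes g vy vv cxv cyv p :: real
  assumes "g * vv \<le> cyv * cxv" and "p * vv = cxv" and "cyv\<^sup>2 \<le> vy * vv" and "0 \<le> g" and "0 < vv"
  shows "g\<^sup>2 \<le> vy * (p\<^sup>2 * vv)"
proof -
  have "(g * vv)\<^sup>2 \<le> (cyv * cxv)\<^sup>2"
    using assms(1,4,5) by (intro power_mono) auto
  also have "\<dots> \<le> vy * vv * cxv\<^sup>2"
    using assms(3) by (simp add: power_mult_distrib mult_right_mono)
  also have "\<dots> = vy * (p\<^sup>2 * vv) * vv * vv"
    by (simp add: power2_eq_square algebra_simps flip: assms(2))
  finally show ?thesis
    using assms(5) by (simp add: power2_eq_square)
qed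

text \<open>Here \<open>V\<^sub>x, V\<^sub>w\<close> are the variances of the projections of \<open>X\<close> and \<open>W\<^sub>2\<close> on \<open>W\<^sub>1\<close> and \<open>k\<close> their
  covariance, so that \<open>V\<^sub>x - 2pk + p\<^sup>2V\<^sub>w = var(\<pi>\<^sub>1'W\<^sub>1)\<close>.\<close>
lemma rx_bound_sq_le:
  fixes p k r Vx Vw vv :: real
  assumes "k\<^sup>2 \<le> Vx * Vw" and "Vw + vv = 1" and "0 < vv"
    and "\<bar>p\<bar> \<le> r * sqrt (Vx - 2 * p * k + p\<^sup>2 * Vw)" and "0 \<le> Vx - 2 * p * k + p\<^sup>2 * Vw"
  shows "p\<^sup>2 * vv \<le> r\<^sup>2 * (Vx + p\<^sup>2 * vv)"
proof -
  define v1 where "v1 = Vx - 2 * p * k + p\<^sup>2 * Vw"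
  have "p\<^sup>2 \<le> (r * sqrt v1)\<^sup>2"
    using power_mono[OF assms(4) abs_ge_zero, of 2] by (simp add: v1_def)
  then have "p\<^sup>2 \<le> r\<^sup>2 * v1"
    using assms(5) by (simp add: v1_def power_mult_distrib)
  have "0 \<le> (k + vv * p)\<^sup>2" by simp
  also have "\<dots> = k\<^sup>2 + 2 * vv * p * k + (vv * p)\<^sup>2"
    by (simp add: power2_sum)
  finally have "0 \<le> Vx * Vw + 2 * vv * p * k + (vv * p)\<^sup>2"
    using assms(1) by linarith
  also have "\<dots> = Vx + p\<^sup>2 * vv - vv * v1"
  proof -
    have Vw: "Vw = 1 - vv" using assms(2) by simp
    show ?thesis by (simp add: Vw v1_def power2_eq_square algebra_simps)
  qed
  finally have "vv * v1 \<le> Vx + p\<^sup>2 * vv" by simp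
  have "p\<^sup>2 * vv \<le> r\<^sup>2 * v1 * vv"
    using \<open>p\<^sup>2 \<le> r\<^sup>2 * v1\<close> assms(3) by (simp add: mult_right_mono)
  also have "\<dots> = r\<^sup>2 * (vv * v1)" by simp
  also have "\<dots> \<le> r\<^sup>2 * (Vx + p\<^sup>2 * vv)"
    using \<open>vv * v1 \<le> Vx + p\<^sup>2 * vv\<close> by (simp add: mult_left_mono)
  finally show ?thesis .
qed

lemma rx_breakdown_le:
  fixes g vy A Vx r :: real
  assumes "g\<^sup>2 \<le> vy * A" and "A \<le> r\<^sup>2 * (Vx + A)"
    and "0 < Vx" and "0 < vy" and "0 \<le> A" and "0 \<le> r"
  shows "rx_breakdown Vx vy g \<le> r"
proof -
  have "g\<^sup>2 * (Vx + A) \<le> A * (Vx * vy + g\<^sup>2)"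
    using mult_right_mono[OF assms(1), of Vx] assms(3) by (simp add: algebra_simps)
  then have "g\<^sup>2 / (Vx * vy + g\<^sup>2) \<le> A / (Vx + A)"
    using assms(3-5) by (simp add: divide_le_eq le_divide_eq add_pos_nonneg mult.commute)
  also have "\<dots> \<le> r\<^sup>2"
    using assms(2,3,5) by (simp add: divide_le_eq)
  finally show ?thesis
    using assms(6) real_sqrt_le_mono by (fastforce simp: rx_breakdown_def)
qed

locale long_model = prob_space M for M :: "'a measure" +
  fixes Y X W2 :: "'a \<Rightarrow> real" and W :: "'a \<Rightarrow> real^'d::finite"
  assumes second_moment_Y' [simp]: "second_moment M Y"
    and second_moment_X' [simp]: "second_moment M X"
    and second_moment_W2 [simp]: "second_moment M W2"
    and second_moment_W1': "\<And>i. second_moment M (\<lambda>x. W x $ i)"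
    and posdef_YXWW: "posdef (covmat M (fam_YXWW Y X W W2))"
begin

lemma second_moment_fam_YXWW: "second_moment M (fam_YXWW Y X W W2 k)"
  by (cases k) (simp_all add: fam_YXWW_def second_moment_W1')

lemma second_moment_fam_XWW: "second_moment M (fam_XWW X W W2 k)"
  by (cases k) (simp_all add: fam_XWW_def second_moment_W1')

lemma second_moment_fam_WW: "second_moment M (fam_WW W W2 k)"
  by (cases k) (simp_all add: fam_WW_def second_moment_W1')

lemma posdef_covmat_YXW: "posdef (covmat M (fam_YXW Y X W))"
proof -
  define g where "g k = (case k of lY \<Rightarrow> mY | lX \<Rightarrow> mX | lW i \<Rightarrow> mW1 i)" for k :: "'d idx_YXW"
  have "fam_YXW Y X W = (\<lambda>j. fam_YXWW Y X W W2 (g j))"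
    by (auto simp: fun_eq_iff fam_YXW_def fam_YXWW_def g_def split: idx_YXW.splits)
  moreover have "inj g" by (auto simp: inj_def g_def split: idx_YXW.splits)
  ultimately show ?thesis
    using posdef_covmat_reindex[OF posdef_YXWW second_moment_fam_YXWW, of g] by simp
qed

lemma posdef_covmat_XWW: "posdef (covmat M (fam_XWW X W W2))"
proof -
  define g where "g k = (case k of kX \<Rightarrow> mX | kW1 i \<Rightarrow> mW1 i | kW2 \<Rightarrow> mW2)" for k :: "'d idx_XWW"
  have "fam_XWW X W W2 = (\<lambda>j. fam_YXWW Y X W W2 (g j))"
    by (auto simp: fun_eq_iff fam_XWW_def fam_YXWW_def g_def split: idx_XWW.splits)
  moreover have "inj g" by (auto simp: inj_def g_def split: idx_XWW.splits)
  ultimately show ?thesis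
    using posdef_covmat_reindex[OF posdef_YXWW second_moment_fam_YXWW, of g] by simp
qed

lemma posdef_covmat_WW: "posdef (covmat M (fam_WW W W2))"
proof -
  define g where "g k = (case k of jW1 i \<Rightarrow> mW1 i | jW2 \<Rightarrow> mW2)" for k :: "'d idx_WW"
  have "fam_WW W W2 = (\<lambda>j. fam_YXWW Y X W W2 (g j))"
    by (auto simp: fun_eq_iff fam_WW_def fam_YXWW_def g_def split: idx_WW.splits)
  moreover have "inj g" by (auto simp: inj_def g_def split: idx_WW.splits)
  ultimately show ?thesis
    using posdef_covmat_reindex[OF posdef_YXWW second_moment_fam_YXWW, of g] by simp
qed

end

sublocale long_model \<subseteq> observed_model M Y X W
  by unfold_locales (simp_all add: second_moment_W1' posdef_covmat_YXW)

context long_model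
begin

lemma pi_eq_wresid:
  "pi2 M X W W2 * varm M (wresid M W W2) = cov M (wresid M W X) (wresid M W W2)"
  "pi1 M X W W2 = wcoef M W X - pi2 M X W W2 *\<^sub>R wcoef M W W2"
proof -
  define p where "p = proj_coef M (fam_WW W W2) X"
  define a where "a = (\<chi> i. p $ jW1 i)"
  define t where "t = p $ jW2"
  define u where "u = (\<lambda>x. X x - (a \<bullet> W x + t * W2 x))"
  have sm_u [simp]: "second_moment M u" by (simp add: u_def)
  have orth: "cov M (fam_WW W W2 k) u = 0" for k
    using cov_proj_residual[OF posdef_invertible[OF posdef_covmat_WW] second_moment_fam_WW, of X k]
    by (simp add: inner_fam_WW u_def p_def a_def t_def)
  have uW: "cov M (\<lambda>x. W x $ i) u = 0" for i
    using orth[of "jW1 i"] by (simp add: fam_WW_def)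
  have "cov M u (wresid M W W2) = 0"
    using orth[of jW2] uW by (intro cov_wresid_eq_0) (simp_all add: fam_WW_def)
  moreover have "X = (\<lambda>x. a \<bullet> W x + t * W2 x + u x)"
    by (simp add: u_def)
  then have "cov M X (wresid M W W2) = cov M (\<lambda>x. a \<bullet> W x + t * W2 x + u x) (wresid M W W2)"
    by simp
  ultimately have "cov M X (wresid M W W2) = t * cov M W2 (wresid M W W2)"
    by (simp add: cov_add_left cov_scale_left cov_inner_W_wresid)
  then show "pi2 M X W W2 * varm M (wresid M W W2) = cov M (wresid M W X) (wresid M W W2)"
    by (simp add: cov_wresid_left[symmetric] varm_def pi2_def t_def p_def)
  have "wcoef M W X = a + t *\<^sub>R wcoef M W W2"
    unfolding wcoef_def
  proof (rule proj_coef_unique[OF invertible_covmat_W second_moment_wfam second_moment_X'])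
    fix i
    have "(\<lambda>x. X x - (a + t *\<^sub>R proj_coef M (wfam W) W2) \<bullet> (\<chi> k. wfam W k x))
          = (\<lambda>x. u x + t * wresid M W W2 x)"
      by (simp add: u_def wresid_def wcoef_def algebra_simps)
    then show "cov M (wfam W i) (\<lambda>x. X x - (a + t *\<^sub>R proj_coef M (wfam W) W2) \<bullet> (\<chi> k. wfam W k x)) = 0"
      using uW[of i] cov_W_wresid[of W2 i]
      by (simp add: cov_add_right cov_scale_right wfam_def second_moment_W1')
  qed
  then show "pi1 M X W W2 = wcoef M W X - pi2 M X W W2 *\<^sub>R wcoef M W W2"
    by (simp add: pi1_def pi2_def a_def t_def p_def)
qed

text \<open>Frisch--Waugh--Lovell for \<open>\<beta>\<^sub>l\<^sub>o\<^sub>n\<^sub>g\<close>, with the \<open>2\<times>2\<close> Gram matrix of \<open>X\<^sup>\<bottom>\<^sup>W\<^sup>1\<close>, \<open>W\<^sub>2\<^sup>\<bottom>\<^sup>W\<^sup>1\<close>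
  multiplied through to avoid dividing by its determinant.\<close>
lemma beta_long_gram:
  "beta_long M Y X W W2 * (varm M (wresid M W X) * varm M (wresid M W W2)
                             - (cov M (wresid M W X) (wresid M W W2))\<^sup>2)
   = cov M (wresid M W Y) (wresid M W X) * varm M (wresid M W W2)
     - cov M (wresid M W Y) (wresid M W W2) * cov M (wresid M W X) (wresid M W W2)"
proof -
  define p where "p = proj_coef M (fam_XWW X W W2) Y"
  define b where "b = p $ kX"
  define t where "t = p $ kW2"
  define e where "e = (\<lambda>x. Y x - (b * X x + (\<chi> i. p $ kW1 i) \<bullet> W x + t * W2 x))"
  have sm_e [simp]: "second_moment M e" by (simp add: e_def)
  have orth: "cov M (fam_XWW X W W2 k) e = 0" for k
    using cov_proj_residual[OF posdef_invertible[OF posdef_covmat_XWW] second_moment_fam_XWW, of Y k]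
    by (simp add: inner_fam_XWW e_def p_def b_def t_def)
  have eW: "cov M (\<lambda>x. W x $ i) e = 0" for i
    using orth[of "kW1 i"] by (simp add: fam_XWW_def)
  have Y_eq: "Y = (\<lambda>x. b * X x + (\<chi> i. p $ kW1 i) \<bullet> W x + t * W2 x + e x)"
    by (simp add: e_def)
  have cov_Y: "cov M (wresid M W Y) (wresid M W h)
      = b * cov M (wresid M W X) (wresid M W h) + t * cov M (wresid M W W2) (wresid M W h)"
    if "second_moment M h" "cov M h e = 0" for h
  proof -
    have "cov M e (wresid M W h) = 0"
      using that eW by (intro cov_wresid_eq_0) simp_all
    then have "cov M Y (wresid M W h) = b * cov M X (wresid M W h) + t * cov M W2 (wresid M W h)"
      using that by (subst Y_eq) (simp add: cov_add_left cov_scale_left cov_inner_W_wresid)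
    then show ?thesis
      using that by (simp add: cov_wresid_left)
  qed
  have "cov M (wresid M W Y) (wresid M W X)
        = b * varm M (wresid M W X) + t * cov M (wresid M W X) (wresid M W W2)"
    using cov_Y[of X] orth[of kX] by (simp add: fam_XWW_def varm_def cov_sym)
  moreover have "cov M (wresid M W Y) (wresid M W W2)
        = b * cov M (wresid M W X) (wresid M W W2) + t * varm M (wresid M W W2)"
    using cov_Y[of W2] orth[of kW2] by (simp add: fam_XWW_def varm_def)
  ultimately show ?thesis
    by (simp add: beta_long_def b_def p_def power2_eq_square algebra_simps)
qed

lemma R_W2_W1_eq: "R_W2_W1 M W W2 = sqrt (varm M (\<lambda>x. wcoef M W W2 \<bullet> W x) / varm M W2)"
  unfolding R_W2_W1_def using varm_fitted[OF second_moment_W2]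
  by (simp add: wcoef_def proj_coef_def)

lemma varm_wresid_XW2_pos:
  assumes "(s, t) \<noteq> (0, 0)"
  shows "0 < varm M (\<lambda>x. s * wresid M W X x + t * wresid M W W2 x)"
proof -
  define v :: "real^'d idx_YXWW" where
    "v = (\<chi> k. case k of mY \<Rightarrow> 0 | mX \<Rightarrow> s | mW2 \<Rightarrow> t
                | mW1 i \<Rightarrow> - s * wcoef M W X $ i - t * wcoef M W W2 $ i)"
  have "v $ mX \<noteq> 0 \<or> v $ mW2 \<noteq> 0"
    using assms by (simp add: v_def)
  then have "v \<noteq> 0" by auto
  moreover have "(\<lambda>x. s * wresid M W X x + t * wresid M W W2 x) = (\<lambda>x. v \<bullet> (\<chi> k. fam_YXWW Y X W W2 k x))"
    by (rule ext, subst inner_fam_YXWW)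
      (simp add: wresid_def v_def inner_vec_def algebra_simps sum_subtractf sum_distrib_left
        sum_negf)
  ultimately show ?thesis
    using posdef_varm_pos[OF posdef_YXWW second_moment_fam_YXWW] by simp
qed

lemma varm_wresid_W2_pos: "0 < varm M (wresid M W W2)"
  using varm_wresid_XW2_pos[of 0 1] by (simp add: fun_eq_iff)

lemma gram_det_wresid_XW2_pos:
  "0 < varm M (wresid M W X) * varm M (wresid M W W2) - (cov M (wresid M W X) (wresid M W W2))\<^sup>2"
proof (rule gram_det_pos)
  show "0 < varm M (\<lambda>x. wresid M W X x - t * wresid M W W2 x)" for t
    using varm_wresid_XW2_pos[of 1 "- t"] by simp
qed (simp_all add: varm_wresid_W2_pos)

lemma beta_long_nonpos_iff:
  "beta_long M Y X W W2 \<le> 0 \<longleftrightarrow>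
     cov M (wresid M W Y) (wresid M W X) * varm M (wresid M W W2)
       \<le> cov M (wresid M W Y) (wresid M W W2) * cov M (wresid M W X) (wresid M W W2)"
proof -
  define D where "D = varm M (wresid M W X) * varm M (wresid M W W2) - (cov M (wresid M W X) (wresid M W W2))\<^sup>2"
  have "0 < D" using gram_det_wresid_XW2_pos by (simp add: D_def)
  then have "beta_long M Y X W W2 \<le> 0 \<longleftrightarrow> beta_long M Y X W W2 * D \<le> 0"
    by (simp add: mult_le_0_iff)
  also have "beta_long M Y X W W2 * D
      = cov M (wresid M W Y) (wresid M W X) * varm M (wresid M W W2)
        - cov M (wresid M W Y) (wresid M W W2) * cov M (wresid M W X) (wresid M W W2)"
    using beta_long_gram by (simp add: D_def)
  finally show ?thesis
    by simp
qed

lemma pi2_eq: "pi2 M X W W2 = cov M (wresid M W X) (wresid M W W2) / varm M (wresid M W W2)"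
  using pi_eq_wresid(1) varm_wresid_W2_pos by (simp add: eq_divide_eq)

lemma A_rx_iff:
  assumes "varm M W2 = 1"
  shows "A_rx r M X W W2 \<longleftrightarrow> \<bar>pi2 M X W W2\<bar> \<le> r * sqrt (varm M (\<lambda>x. wcoef M W X \<bullet> W x)
            - 2 * pi2 M X W W2 * cov M (\<lambda>x. wcoef M W X \<bullet> W x) (\<lambda>x. wcoef M W W2 \<bullet> W x)
            + (pi2 M X W W2)\<^sup>2 * varm M (\<lambda>x. wcoef M W W2 \<bullet> W x))"
proof -
  have "(\<lambda>x. pi1 M X W W2 \<bullet> W x) = (\<lambda>x. wcoef M W X \<bullet> W x - pi2 M X W W2 * (wcoef M W W2 \<bullet> W x))"
    by (simp add: pi_eq_wresid(2) inner_diff_left)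
  then show ?thesis
    using varm_diff_scale[of "\<lambda>x. wcoef M W X \<bullet> W x" "\<lambda>x. wcoef M W W2 \<bullet> W x" "pi2 M X W W2"]
    by (simp add: A_rx_def varm_scale assms)
qed

lemma rx_breakdown_le_of_sign_reversal:
  assumes "beta_long M Y X W W2 \<le> 0" and "varm M W2 = 1" and "A_rx r M X W W2"
    and "0 \<le> r" and "0 \<le> beta_med M Y X W" and "covvec M (wfam W) X \<noteq> 0"
  shows "rx_breakdown (varm M (\<lambda>x. wcoef M W X \<bullet> W x)) (varm M (wresid M W Y))
           (cov M (wresid M W Y) (wresid M W X)) \<le> r"
proof (rule rx_breakdown_le)
  define p where "p = pi2 M X W W2"
  define Fx where "Fx = (\<lambda>x. wcoef M W X \<bullet> W x)"
  define Fw where "Fw = (\<lambda>x. wcoef M W W2 \<bullet> W x)"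
  show "(cov M (wresid M W Y) (wresid M W X))\<^sup>2
        \<le> varm M (wresid M W Y) * (p\<^sup>2 * varm M (wresid M W W2))"
  proof (rule sign_reversal_sq_le)
    show "cov M (wresid M W Y) (wresid M W X) * varm M (wresid M W W2)
        \<le> cov M (wresid M W Y) (wresid M W W2) * cov M (wresid M W X) (wresid M W W2)"
      using assms(1) beta_long_nonpos_iff by simp
    show "p * varm M (wresid M W W2) = cov M (wresid M W X) (wresid M W W2)"
      using pi_eq_wresid(1) by (simp add: p_def)
    show "0 \<le> cov M (wresid M W Y) (wresid M W X)"
      using cov_wresid_eq_beta_med assms(5) varm_wresid_X_pos by simp
  qed (simp_all add: cov_Cauchy_Schwarz varm_wresid_W2_pos)
  have rx: "\<bar>p\<bar> \<le> r * sqrt (varm M Fx - 2 * p * cov M Fx Fw + p\<^sup>2 * varm M Fw)"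
    using assms(3) A_rx_iff[OF assms(2)] by (simp add: Fx_def Fw_def p_def)
  have W2_split: "varm M Fw + varm M (wresid M W W2) = 1"
    using varm_fitted_plus_wresid[OF second_moment_W2] assms(2) by (simp add: Fw_def)
  have "0 \<le> varm M Fx - 2 * p * cov M Fx Fw + p\<^sup>2 * varm M Fw"
    using varm_diff_scale[of Fx Fw p] varm_nonneg[of "\<lambda>x. Fx x - p * Fw x"]
    by (simp add: Fx_def Fw_def)
  from rx_bound_sq_le[OF cov_Cauchy_Schwarz W2_split varm_wresid_W2_pos rx this]
  show "p\<^sup>2 * varm M (wresid M W W2)
        \<le> r\<^sup>2 * (varm M (\<lambda>x. wcoef M W X \<bullet> W x) + p\<^sup>2 * varm M (wresid M W W2))"
    by (simp add: Fx_def Fw_def)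
  show "0 \<le> p\<^sup>2 * varm M (wresid M W W2)"
    by (simp add: varm_nonneg)
qed (simp_all add: varm_fitted_X_pos assms(4,6) varm_wresid_Y_pos)

end

lemma borel_measurable_vec:
  fixes f :: "'a \<Rightarrow> real^'d::finite"
  assumes "\<And>i. (\<lambda>x. f x $ i) \<in> borel_measurable M"
  shows "f \<in> borel_measurable M"
  by (subst borel_measurable_euclidean_space) (auto simp: Basis_vec_def inner_axis assms)

lemma coords_eq:
  "cY = fst" "cX = (\<lambda>v. fst (snd v))" "cW1 = (\<lambda>v. fst (snd (snd v)))" "cW2 = (\<lambda>v. snd (snd (snd v)))"
  by (auto simp: fun_eq_iff cY_def cX_def cW1_def cW2_def)

lemma borel_measurable_obs:
  "(\<lambda>v::real \<times> real \<times> (real^'d::finite) \<times> real. (cY v, cX v, cW1 v)) \<in> borel_measurable borel"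
  unfolding coords_eq by (intro borel_measurable_continuous_onI continuous_intros)

lemma continuous_on_obs:
  fixes F :: "real \<times> real \<times> (real^'d::finite) \<Rightarrow> real"
  assumes "continuous_on UNIV F"
  shows "continuous_on UNIV (\<lambda>v::real \<times> real \<times> (real^'d) \<times> real. F (cY v, cX v, cW1 v))"
  using assms unfolding coords_eq by (rule continuous_on_compose2) (auto intro!: continuous_intros)

context observed_model
begin

lemma W_measurable: "W \<in> borel_measurable M"
  using second_moment_W1 by (intro borel_measurable_vec) (auto simp: second_moment_def)

lemma obs_measurable: "(\<lambda>w. (Y w, X w, W w)) \<in> borel_measurable M"
  using W_measurable second_moment_measurable[OF second_moment_Y]
    second_moment_measurable[OF second_moment_X]
  by (intro borel_measurable_Pair)

end

locale same_law = observed_model M Y X W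
  for M :: "'a measure" and Y X and W :: "'a \<Rightarrow> real^'d::finite" +
  fixes N :: "(real \<times> real \<times> (real^'d) \<times> real) measure"
  assumes prob_space_N: "prob_space N" and sets_N: "sets N = sets borel"
    and distr_N: "distr N borel (\<lambda>v. (cY v, cX v, cW1 v)) = distr M borel (\<lambda>w. (Y w, X w, W w))"
begin

lemma obs_measurable_N: "(\<lambda>v. (cY v, cX v, cW1 v)) \<in> borel_measurable N"
  using borel_measurable_obs measurable_cong_sets[OF sets_N refl] by blast

lemma integral_obs_eq:
  fixes F :: "real \<times> real \<times> (real^'d) \<Rightarrow> real"
  assumes "F \<in> borel_measurable borel"
  shows "integral\<^sup>L N (\<lambda>v. F (cY v, cX v, cW1 v)) = integral\<^sup>L M (\<lambda>w. F (Y w, X w, W w))"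
  using integral_distr[OF obs_measurable_N assms] integral_distr[OF obs_measurable assms]
  by (simp add: distr_N)

lemma cov_obs_eq:
  fixes F G :: "real \<times> real \<times> (real^'d) \<Rightarrow> real"
  assumes "continuous_on UNIV F" "continuous_on UNIV G"
  shows "cov N (\<lambda>v. F (cY v, cX v, cW1 v)) (\<lambda>v. G (cY v, cX v, cW1 v))
       = cov M (\<lambda>w. F (Y w, X w, W w)) (\<lambda>w. G (Y w, X w, W w))"
proof -
  have [measurable]: "F \<in> borel_measurable borel" "G \<in> borel_measurable borel"
    using assms by (simp_all add: borel_measurable_continuous_onI)
  define mF where "mF = mean M (\<lambda>w. F (Y w, X w, W w))"
  define mG where "mG = mean M (\<lambda>w. G (Y w, X w, W w))"
  have "mean N (\<lambda>v. F (cY v, cX v, cW1 v)) = mF" "mean N (\<lambda>v. G (cY v, cX v, cW1 v)) = mG"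
    by (simp_all add: mean_def integral_obs_eq mF_def mG_def)
  moreover have "(\<lambda>t. (F t - mF) * (G t - mG)) \<in> borel_measurable borel"
    by measurable
  note integral_obs_eq[OF this]
  ultimately show ?thesis
    unfolding cov_def by (simp add: mean_def mF_def mG_def)
qed

lemma second_moment_obs_iff:
  fixes F :: "real \<times> real \<times> (real^'d) \<Rightarrow> real"
  assumes "continuous_on UNIV F"
  shows "second_moment N (\<lambda>v. F (cY v, cX v, cW1 v)) \<longleftrightarrow> second_moment M (\<lambda>w. F (Y w, X w, W w))"
proof -
  have F [measurable]: "F \<in> borel_measurable borel"
    using assms by (rule borel_measurable_continuous_onI)
  have F2: "(\<lambda>t. (F t)\<^sup>2) \<in> borel_measurable borel" by measurable
  have "integrable N (\<lambda>v. (F (cY v, cX v, cW1 v))\<^sup>2) \<longleftrightarrow> integrable M (\<lambda>w. (F (Y w, X w, W w))\<^sup>2)"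
    using integrable_distr_eq[OF obs_measurable_N F2] integrable_distr_eq[OF obs_measurable F2]
    by (simp add: distr_N)
  then show ?thesis
    using measurable_compose[OF obs_measurable_N F] measurable_compose[OF obs_measurable F]
    by (simp add: second_moment_def)
qed

lemma second_moment_N_Y [simp]: "second_moment N cY"
  using second_moment_obs_iff[of fst] by (simp add: continuous_intros)

lemma second_moment_N_X [simp]: "second_moment N cX"
  using second_moment_obs_iff[of "\<lambda>t. fst (snd t)"] by (simp add: continuous_intros)

lemma second_moment_N_W1: "second_moment N (\<lambda>v. cW1 v $ i)"
  using second_moment_obs_iff[of "\<lambda>t. snd (snd t) $ i"] second_moment_W1[of i]
  by (simp add: continuous_intros)

lemma covmat_N_W1: "covmat N (wfam cW1) = covmat M (wfam W)"
  using cov_obs_eq[of "\<lambda>t. snd (snd t) $ _" "\<lambda>t. snd (snd t) $ _"]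
  by (simp add: covmat_def vec_eq_iff wfam_def continuous_intros)

lemma covvec_N_W1:
  "covvec N (wfam cW1) cY = covvec M (wfam W) Y" "covvec N (wfam cW1) cX = covvec M (wfam W) X"
  using cov_obs_eq[of "\<lambda>t. snd (snd t) $ _" fst] cov_obs_eq[of "\<lambda>t. snd (snd t) $ _" "\<lambda>t. fst (snd t)"]
  by (simp_all add: covvec_def vec_eq_iff wfam_def continuous_intros)

lemma wcoef_N_Y: "wcoef N cW1 cY = wcoef M W Y"
  by (simp add: wcoef_def proj_coef_def covmat_N_W1 covvec_N_W1)

lemma wcoef_N_X: "wcoef N cW1 cX = wcoef M W X"
  by (simp add: wcoef_def proj_coef_def covmat_N_W1 covvec_N_W1)

end

sublocale same_law \<subseteq> N: partial_out N cW1
  using prob_space_N second_moment_N_W1 posdef_W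
  by (intro partial_out.intro partial_out_axioms.intro) (simp_all add: covmat_N_W1)

context same_law
begin

lemma wresid_N_eq:
  "wresid N cW1 cY = (\<lambda>v. (\<lambda>t. fst t - wcoef M W Y \<bullet> snd (snd t)) (cY v, cX v, cW1 v))"
  "wresid N cW1 cX = (\<lambda>v. (\<lambda>t. fst (snd t) - wcoef M W X \<bullet> snd (snd t)) (cY v, cX v, cW1 v))"
  by (simp_all add: wresid_def wcoef_N_Y wcoef_N_X)

lemma wresid_M_eq:
  "wresid M W Y = (\<lambda>w. (\<lambda>t. fst t - wcoef M W Y \<bullet> snd (snd t)) (Y w, X w, W w))"
  "wresid M W X = (\<lambda>w. (\<lambda>t. fst (snd t) - wcoef M W X \<bullet> snd (snd t)) (Y w, X w, W w))"
  by (simp_all add: wresid_def)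

lemma wresid_moments_N:
  "varm N (wresid N cW1 cY) = varm M (wresid M W Y)"
  "varm N (wresid N cW1 cX) = varm M (wresid M W X)"
  "cov N (wresid N cW1 cY) (wresid N cW1 cX) = cov M (wresid M W Y) (wresid M W X)"
  unfolding varm_def wresid_N_eq wresid_M_eq by (rule cov_obs_eq; intro continuous_intros)+

lemma varm_fitted_N_X: "varm N (\<lambda>v. wcoef N cW1 cX \<bullet> cW1 v) = varm M (\<lambda>w. wcoef M W X \<bullet> W w)"
  using cov_obs_eq[of "\<lambda>t. wcoef M W X \<bullet> snd (snd t)" "\<lambda>t. wcoef M W X \<bullet> snd (snd t)"]
  by (simp add: varm_def wcoef_N_X continuous_intros)

lemma beta_med_N: "beta_med N cY cX cW1 = beta_med M Y X W"
proof -
  define F :: "'d idx_XW \<Rightarrow> real \<times> real \<times> (real^'d) \<Rightarrow> real"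
    where "F k = (case k of iX \<Rightarrow> (\<lambda>t. fst (snd t)) | iW i \<Rightarrow> (\<lambda>t. snd (snd t) $ i))" for k
  have F: "continuous_on UNIV (F k)" for k
    by (cases k) (simp_all add: F_def continuous_intros)
  have "fam_XW cX cW1 k = (\<lambda>v. F k (cY v, cX v, cW1 v))" "fam_XW X W k = (\<lambda>w. F k (Y w, X w, W w))" for k
    by (cases k; simp add: F_def fam_XW_def)+
  then have "covmat N (fam_XW cX cW1) = covmat M (fam_XW X W)"
    "covvec N (fam_XW cX cW1) cY = covvec M (fam_XW X W) Y"
    using cov_obs_eq[OF F F] cov_obs_eq[OF F, of fst]
    by (simp_all add: covmat_def covvec_def vec_eq_iff continuous_intros)
  then show ?thesis
    by (simp add: beta_med_def proj_coef_def)
qed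

lemma rx_breakdown_le_of_law:
  assumes "A1 N cY cX cW1 cW2" and "second_moment N cW2" and "varm N cW2 = 1"
    and "A_rx r N cX cW1 cW2" and "0 \<le> r" and "beta_long N cY cX cW1 cW2 \<le> 0"
    and "0 \<le> beta_med M Y X W" and "covvec M (wfam W) X \<noteq> 0"
  shows "rx_breakdown (varm M (\<lambda>x. wcoef M W X \<bullet> W x)) (varm M (wresid M W Y))
           (cov M (wresid M W Y) (wresid M W X)) \<le> r"
proof -
  interpret L: long_model N cY cX cW2 cW1
    using prob_space_N assms(1,2) second_moment_N_W1
    by (intro long_model.intro long_model_axioms.intro) (simp_all add: A1_def)
  from L.rx_breakdown_le_of_sign_reversal[OF assms(6,3,4,5)] assms(8) assms(7) show ?thesis
    by (simp add: beta_med_N wresid_moments_N varm_fitted_N_X covvec_N_W1)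
qed

end

section \<open>The sharpness witness\<close>

definition rademacher :: "real measure" where
  "rademacher = measure_pmf (pmf_of_set {-1, 1})"

lemma prob_space_rademacher: "prob_space rademacher"
  unfolding rademacher_def by (rule prob_space_measure_pmf)

lemma integral_rademacher: "integral\<^sup>L rademacher (g :: real \<Rightarrow> real) = (g 1 + g (-1)) / 2"
  unfolding rademacher_def by (subst integral_pmf_of_set) auto

lemma integrable_rademacher: "integrable rademacher (g :: real \<Rightarrow> real)"
  unfolding rademacher_def by (rule integrable_measure_pmf_finite) (simp add: set_pmf_of_set)

lemma measurable_snd_rademacher [measurable]: "snd \<in> borel_measurable (M \<Otimes>\<^sub>M rademacher)"
  by (rule measurable_compose[OF measurable_snd]) (simp add: rademacher_def)

lemma integral_pair_rademacher:
  fixes f :: "'a \<times> real \<Rightarrow> real"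
  assumes "prob_space M" and f: "f \<in> borel_measurable (M \<Otimes>\<^sub>M rademacher)"
    and i1: "integrable M (\<lambda>x. f (x, 1))" and i2: "integrable M (\<lambda>x. f (x, -1))"
  shows "integrable (M \<Otimes>\<^sub>M rademacher) f"
    and "integral\<^sup>L (M \<Otimes>\<^sub>M rademacher) f = (integral\<^sup>L M (\<lambda>x. f (x, 1)) + integral\<^sup>L M (\<lambda>x. f (x, -1))) / 2"
proof -
  interpret pair_sigma_finite M rademacher
    using assms(1) prob_space_rademacher by (intro pair_sigma_finite.intro prob_space_imp_sigma_finite)
  show I: "integrable (M \<Otimes>\<^sub>M rademacher) f"
    using i1 i2 by (intro Fubini_integrable[OF f]) (simp_all add: integral_rademacher integrable_rademacher)
  have "integral\<^sup>L (M \<Otimes>\<^sub>M rademacher) f = (\<integral>x. (f (x, 1) + f (x, -1)) / 2 \<partial>M)"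
    using integral_fst'[OF I] by (simp add: integral_rademacher)
  then show "integral\<^sup>L (M \<Otimes>\<^sub>M rademacher) f = (integral\<^sup>L M (\<lambda>x. f (x, 1)) + integral\<^sup>L M (\<lambda>x. f (x, -1))) / 2"
    using i1 i2 by simp
qed

text \<open>Conditions on the coefficients of the witness \<open>W\<^sub>2 = \<alpha> Y\<^sup>\<bottom>\<^sup>W\<^sup>1 + b X\<^sup>\<bottom>\<^sup>W\<^sup>1 + \<delta> \<pi>'W\<^sub>1 + \<sigma> Z\<close>, in
  terms of \<open>v\<^sub>y, v\<^sub>x, g, V\<^sub>x\<close>: here \<open>vv, cxv, cyv\<close> are \<open>var(W\<^sub>2\<^sup>\<bottom>\<^sup>W\<^sup>1)\<close> and its covariances with
  \<open>X\<^sup>\<bottom>\<^sup>W\<^sup>1, Y\<^sup>\<bottom>\<^sup>W\<^sup>1\<close>; the conjuncts say \<open>var W\<^sub>2 = 1\<close>, \<open>\<beta>\<^sub>l\<^sub>o\<^sub>n\<^sub>g \<le> 0\<close> and (A-rx).\<close>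
definition witness_params :: "real \<Rightarrow> real \<Rightarrow> real \<Rightarrow> real \<Rightarrow> real \<Rightarrow> real \<Rightarrow> real \<Rightarrow> real \<Rightarrow> real \<Rightarrow> bool" where
  "witness_params vy vx g Vx r \<alpha> b \<delta> \<sigma> \<longleftrightarrow>
     (let vv = \<alpha>\<^sup>2 * vy + 2 * \<alpha> * b * g + b\<^sup>2 * vx + \<sigma>\<^sup>2; cxv = \<alpha> * g + b * vx; cyv = \<alpha> * vy + b * g
      in 0 < \<sigma> \<and> \<delta>\<^sup>2 * Vx + vv = 1 \<and> g * vv \<le> cyv * cxv
         \<and> \<bar>cxv / vv\<bar> \<le> r * sqrt (Vx - 2 * (cxv / vv) * (\<delta> * Vx) + (cxv / vv)\<^sup>2 * (\<delta>\<^sup>2 * Vx)))"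

text \<open>With \<open>b = \<mu> \<alpha>\<close> and \<open>\<sigma>\<^sup>2 = \<alpha>\<^sup>2 \<mu> (v\<^sub>x v\<^sub>y - g\<^sup>2) / g\<close> the witness has \<open>vv = \<alpha>\<^sup>2 T\<close>, \<open>cxv = \<alpha> G\<close> and
  \<open>g vv = cyv cxv\<close>, i.e. \<open>\<beta>\<^sub>l\<^sub>o\<^sub>n\<^sub>g = 0\<close> exactly.\<close>
lemma balanced_mix:
  fixes g vx vy G :: real
  assumes "0 < g" and "0 < vx" and "0 < vx * vy - g\<^sup>2" and "g < G"
  defines "\<mu> \<equiv> (G - g) / vx"
  defines "T \<equiv> vy + 2 * \<mu> * g + \<mu>\<^sup>2 * vx + \<mu> * (vx * vy - g\<^sup>2) / g"
  shows "0 < \<mu>" and "g + \<mu> * vx = G" and "vy \<le> T" and "g * T = (vy + \<mu> * g) * G"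
proof -
  show "0 < \<mu>" and G: "g + \<mu> * vx = G"
    using assms(2,4) by (simp_all add: \<mu>_def)
  then show "vy \<le> T"
    using assms(1-3) by (simp add: T_def)
  show "g * T = (vy + \<mu> * g) * G"
    using assms(1) by (simp add: T_def flip: G) (simp add: field_simps power2_eq_square)
qed

lemma rx_condition_witness:
  fixes Vx A r :: real
  assumes "0 < Vx" and "0 < A" and "A \<le> r\<^sup>2 * (Vx + A)" and "0 \<le> r"
  defines "vv \<equiv> Vx / (Vx + A)"
    and "p \<equiv> sqrt A * sqrt (Vx + A) / sqrt Vx" and "\<delta> \<equiv> - sqrt A / (sqrt (Vx + A) * sqrt Vx)"
  shows "\<delta>\<^sup>2 * Vx + vv = 1" and "\<bar>p\<bar> \<le> r * sqrt (Vx - 2 * p * (\<delta> * Vx) + p\<^sup>2 * (\<delta>\<^sup>2 * Vx))"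
proof -
  have pos: "0 < Vx + A" "0 < sqrt Vx" "0 < sqrt (Vx + A)"
    using assms(1,2) by simp_all
  have "\<delta>\<^sup>2 * Vx = A / (Vx + A)"
    using assms(1,2) pos by (simp add: \<delta>_def power_divide power_mult_distrib)
  then show "\<delta>\<^sup>2 * Vx + vv = 1"
    using pos by (simp add: vv_def add_divide_distrib[symmetric])
  have "p * \<delta> = - (sqrt A)\<^sup>2 / (sqrt Vx)\<^sup>2"
    using pos by (simp add: p_def \<delta>_def power2_eq_square)
  then have "p * \<delta> = - (A / Vx)"
    using assms(1,2) by simp
  have "Vx - 2 * p * (\<delta> * Vx) + p\<^sup>2 * (\<delta>\<^sup>2 * Vx) = Vx * (1 - p * \<delta>)\<^sup>2"
    by (simp add: power2_eq_square algebra_simps)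
  also have "\<dots> = Vx * ((Vx + A) / Vx)\<^sup>2"
    using \<open>p * \<delta> = - (A / Vx)\<close> assms(1) by (simp add: diff_divide_distrib add_divide_distrib)
  also have "\<dots> = ((Vx + A) / sqrt Vx)\<^sup>2"
    using assms(1) by (simp add: power_divide power2_eq_square)
  finally have "sqrt (Vx - 2 * p * (\<delta> * Vx) + p\<^sup>2 * (\<delta>\<^sup>2 * Vx)) = (Vx + A) / sqrt Vx"
    using pos by simp
  moreover have "sqrt A \<le> r * sqrt (Vx + A)"
    using real_sqrt_le_mono[OF assms(3)] assms(4) by (simp add: real_sqrt_mult)
  then have "sqrt A * sqrt (Vx + A) \<le> r * (Vx + A)"
    using pos mult_right_mono[of "sqrt A" "r * sqrt (Vx + A)" "sqrt (Vx + A)"] by (simp add: mult.assoc)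
  then have "\<bar>p\<bar> \<le> r * (Vx + A) / sqrt Vx"
    using assms(2) pos divide_right_mono[of _ _ "sqrt Vx"] by (simp add: p_def abs_mult)
  ultimately show "\<bar>p\<bar> \<le> r * sqrt (Vx - 2 * p * (\<delta> * Vx) + p\<^sup>2 * (\<delta>\<^sup>2 * Vx))"
    by simp
qed

lemma witness_params_of_balanced_mix:
  fixes g vx vy Vx r \<mu> G T :: real
  assumes "0 < g" and "0 < vx" and "0 < Vx" and "0 \<le> r" and "0 < \<mu>" and D: "0 < vx * vy - g\<^sup>2"
    and G: "g + \<mu> * vx = G" and balanced: "g * T = (vy + \<mu> * g) * G"
    and T: "T = vy + 2 * \<mu> * g + \<mu>\<^sup>2 * vx + \<mu> * (vx * vy - g\<^sup>2) / g"
    and rx: "G\<^sup>2 / T \<le> r\<^sup>2 * (Vx + G\<^sup>2 / T)"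
  shows "\<exists>\<alpha> b \<delta> \<sigma>. witness_params vy vx g Vx r \<alpha> b \<delta> \<sigma>"
proof -
  have "0 < vx * vy" using D zero_le_power2[of g] by linarith
  then have "0 < vy" using assms(2) by (simp add: zero_less_mult_iff)
  then have G_pos: "0 < G" and T_pos: "0 < T"
    using assms(1,2,5) D G by (auto simp: T intro!: add_pos_nonneg)
  define A where "A = G\<^sup>2 / T"
  define vv where "vv = Vx / (Vx + A)"
  define \<delta> where "\<delta> = - sqrt A / (sqrt (Vx + A) * sqrt Vx)"
  define \<alpha> where "\<alpha> = sqrt (vv / T)"
  define \<sigma> where "\<sigma> = \<alpha> * sqrt (\<mu> * (vx * vy - g\<^sup>2) / g)"
  have A_pos: "0 < A" using G_pos T_pos by (simp add: A_def)
  note witness = rx_condition_witness[OF assms(3) A_pos rx[folded A_def] assms(4), folded vv_def \<delta>_def]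
  have "0 < vv" using assms(3) A_pos by (simp add: vv_def)
  then have \<alpha>_pos: "0 < \<alpha>" and vv: "vv = \<alpha>\<^sup>2 * T" and sqrt_vv: "sqrt vv = \<alpha> * sqrt T"
    using T_pos by (simp_all add: \<alpha>_def real_sqrt_divide power_divide)
  have \<sigma>2: "\<sigma>\<^sup>2 = \<alpha>\<^sup>2 * (\<mu> * (vx * vy - g\<^sup>2) / g)"
    using assms(1,5) D by (simp add: \<sigma>_def power_mult_distrib)
  have mix_var: "\<alpha>\<^sup>2 * vy + 2 * \<alpha> * (\<mu> * \<alpha>) * g + (\<mu> * \<alpha>)\<^sup>2 * vx + \<sigma>\<^sup>2 = vv"
    unfolding vv T \<sigma>2 by (simp add: power2_eq_square algebra_simps)
  have cxv: "\<alpha> * g + \<mu> * \<alpha> * vx = \<alpha> * G" and cyv: "\<alpha> * vy + \<mu> * \<alpha> * g = \<alpha> * (vy + \<mu> * g)"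
    by (simp_all add: G[symmetric] algebra_simps)
  have "g * vv = \<alpha>\<^sup>2 * (g * T)"
    by (simp add: vv)
  also have "\<dots> = (\<alpha> * (vy + \<mu> * g)) * (\<alpha> * G)"
    unfolding balanced by (simp add: power2_eq_square)
  finally have "g * vv = (\<alpha> * (vy + \<mu> * g)) * (\<alpha> * G)" .
  moreover have "\<alpha> * G / vv = sqrt A * sqrt (Vx + A) / sqrt Vx"
  proof -
    have "sqrt A * sqrt (Vx + A) / sqrt Vx = sqrt A / sqrt vv"
      using assms(3) A_pos by (simp add: vv_def real_sqrt_divide)
    also have "\<dots> = G / (\<alpha> * T)"
      using G_pos T_pos \<alpha>_pos by (simp add: sqrt_vv A_def real_sqrt_divide field_simps)
    also have "\<dots> = \<alpha> * G / vv"
      using T_pos \<alpha>_pos by (simp add: vv power2_eq_square)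
    finally show ?thesis ..
  qed
  ultimately have "witness_params vy vx g Vx r \<alpha> (\<mu> * \<alpha>) \<delta> \<sigma>"
    unfolding witness_params_def Let_def mix_var cxv cyv
    using witness \<alpha>_pos assms(1,5) D by (simp add: \<sigma>_def)
  then show ?thesis by blast
qed

lemma witness_params_exist:
  fixes g vx vy Vx r :: real
  assumes "0 < g" and "0 < vx" and "0 < Vx" and D: "0 < vx * vy - g\<^sup>2"
    and "rx_breakdown Vx vy g < r" and "r < 1"
  shows "\<exists>\<alpha> b \<delta> \<sigma>. witness_params vy vx g Vx r \<alpha> b \<delta> \<sigma>"
proof -
  have "0 < vx * vy" using D zero_le_power2[of g] by linarith
  then have "0 < vy" using assms(2) by (simp add: zero_less_mult_iff)
  have den: "0 < Vx * vy + g\<^sup>2" using assms(3) \<open>0 < vy\<close> by (simp add: add_pos_nonneg)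
  have "0 \<le> rx_breakdown Vx vy g" using den by (simp add: rx_breakdown_def)
  then have "0 < r" and "r\<^sup>2 < 1"
    using assms(5,6) by (simp_all add: power_less_one_iff)
  have "sqrt (g\<^sup>2 / (Vx * vy + g\<^sup>2)) < sqrt (r\<^sup>2)"
    using assms(5) \<open>0 < r\<close> by (simp add: rx_breakdown_def)
  then have "g\<^sup>2 < r\<^sup>2 * (Vx * vy + g\<^sup>2)"
    using den by (simp only: real_sqrt_less_iff) (simp add: divide_less_eq)
  then have "g\<^sup>2 * (1 - r\<^sup>2) < r\<^sup>2 * Vx * vy"
    by (simp add: algebra_simps)
  define A0 where "A0 = r\<^sup>2 * Vx / (1 - r\<^sup>2)"
  have "g\<^sup>2 < A0 * vy"
    using \<open>g\<^sup>2 * (1 - r\<^sup>2) < r\<^sup>2 * Vx * vy\<close> \<open>r\<^sup>2 < 1\<close> by (simp add: A0_def field_simps)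
  define G where "G = sqrt (A0 * vy)"
  have "g < G"
    using real_sqrt_less_mono[OF \<open>g\<^sup>2 < A0 * vy\<close>] assms(1) by (simp add: G_def)
  define \<mu> where "\<mu> = (G - g) / vx"
  define T where "T = vy + 2 * \<mu> * g + \<mu>\<^sup>2 * vx + \<mu> * (vx * vy - g\<^sup>2) / g"
  note mix = balanced_mix[OF assms(1,2) D \<open>g < G\<close>, folded \<mu>_def, folded T_def]
  have "0 < A0" using \<open>0 < r\<close> \<open>r\<^sup>2 < 1\<close> assms(3) by (simp add: A0_def)
  have "G\<^sup>2 = A0 * vy"
    using \<open>0 < A0\<close> \<open>0 < vy\<close> by (simp add: G_def)
  also have "\<dots> \<le> A0 * T"
    using mix(3) \<open>0 < A0\<close> by simp
  finally have "G\<^sup>2 / T \<le> A0"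
    using mix(3) \<open>0 < vy\<close> by (simp add: divide_le_eq)
  moreover have "A \<le> r\<^sup>2 * (Vx + A)" if "A \<le> A0" for A
  proof -
    have "A * (1 - r\<^sup>2) \<le> r\<^sup>2 * Vx"
      using that \<open>r\<^sup>2 < 1\<close> by (simp add: A0_def le_divide_eq)
    then show ?thesis by (simp add: algebra_simps)
  qed
  ultimately have "G\<^sup>2 / T \<le> r\<^sup>2 * (Vx + G\<^sup>2 / T)" by blast
  with mix show ?thesis
    using assms(1-3) D \<open>0 < r\<close> T_def by (intro witness_params_of_balanced_mix[of g vx Vx r \<mu> vy G T]) simp_all
qed

context observed_model
begin

definition signal :: "real \<Rightarrow> real \<Rightarrow> real \<Rightarrow> real \<times> real \<times> (real^'d) \<Rightarrow> real" where
  "signal \<alpha> b \<delta> t = \<alpha> * (fst t - wcoef M W Y \<bullet> snd (snd t)) + b * (fst (snd t) - wcoef M W X \<bullet> snd (snd t))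
      + \<delta> * (wcoef M W X \<bullet> snd (snd t))"

definition witness_map :: "real \<Rightarrow> real \<Rightarrow> real \<Rightarrow> real \<Rightarrow> 'a \<times> real \<Rightarrow> real \<times> real \<times> (real^'d) \<times> real" where
  "witness_map \<alpha> b \<delta> \<sigma> p =
     (Y (fst p), X (fst p), W (fst p), signal \<alpha> b \<delta> (Y (fst p), X (fst p), W (fst p)) + \<sigma> * snd p)"

definition witness_law :: "real \<Rightarrow> real \<Rightarrow> real \<Rightarrow> real \<Rightarrow> (real \<times> real \<times> (real^'d) \<times> real) measure" where
  "witness_law \<alpha> b \<delta> \<sigma> = distr (M \<Otimes>\<^sub>M rademacher) borel (witness_map \<alpha> b \<delta> \<sigma>)"

definition noise :: "real \<Rightarrow> real \<Rightarrow> real \<Rightarrow> real \<Rightarrow> real \<times> real \<times> (real^'d) \<times> real \<Rightarrow> real" where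
  "noise \<alpha> b \<delta> \<sigma> v = (cW2 v - signal \<alpha> b \<delta> (cY v, cX v, cW1 v)) / \<sigma>"

lemma continuous_on_signal: "continuous_on UNIV (signal \<alpha> b \<delta>)"
  unfolding signal_def[abs_def] by (intro continuous_intros)

lemma signal_obs:
  "(\<lambda>w. signal \<alpha> b \<delta> (Y w, X w, W w))
     = (\<lambda>w. \<alpha> * wresid M W Y w + b * wresid M W X w + \<delta> * (wcoef M W X \<bullet> W w))"
  by (simp add: signal_def wresid_def fun_eq_iff)

lemma second_moment_signal: "second_moment M (\<lambda>w. signal \<alpha> b \<delta> (Y w, X w, W w))"
  unfolding signal_obs by simp

lemma witness_map_measurable: "witness_map \<alpha> b \<delta> \<sigma> \<in> borel_measurable (M \<Otimes>\<^sub>M rademacher)"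
proof -
  have Y: "(\<lambda>p. Y (fst p)) \<in> borel_measurable (M \<Otimes>\<^sub>M rademacher)"
    and X: "(\<lambda>p. X (fst p)) \<in> borel_measurable (M \<Otimes>\<^sub>M rademacher)"
    and W: "(\<lambda>p. W (fst p)) \<in> borel_measurable (M \<Otimes>\<^sub>M rademacher)"
    by (simp_all add: measurable_compose[OF measurable_fst] W_measurable second_moment_measurable)
  have "(\<lambda>p. (Y (fst p), X (fst p), W (fst p))) \<in> borel_measurable (M \<Otimes>\<^sub>M rademacher)"
    by (intro borel_measurable_Pair Y X W)
  from measurable_compose[OF this borel_measurable_continuous_onI[OF continuous_on_signal]]
  have "(\<lambda>p. signal \<alpha> b \<delta> (Y (fst p), X (fst p), W (fst p))) \<in> borel_measurable (M \<Otimes>\<^sub>M rademacher)" .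
  with Y X W show ?thesis
    unfolding witness_map_def
    by (intro borel_measurable_Pair borel_measurable_add borel_measurable_times borel_measurable_const
        measurable_snd_rademacher)
qed

lemma same_law_witness: "same_law M Y X W (witness_law \<alpha> b \<delta> \<sigma>)"
proof -
  have "prob_space (witness_law \<alpha> b \<delta> \<sigma>)"
    unfolding witness_law_def
    by (rule prob_space.prob_space_distr[OF prob_space_pair[OF prob_space_axioms prob_space_rademacher]
          witness_map_measurable])
  moreover have "distr (witness_law \<alpha> b \<delta> \<sigma>) borel (\<lambda>v. (cY v, cX v, cW1 v))
      = distr M borel (\<lambda>w. (Y w, X w, W w))"
  proof -
    have "(\<lambda>v. (cY v, cX v, cW1 v)) \<circ> witness_map \<alpha> b \<delta> \<sigma> = (\<lambda>w. (Y w, X w, W w)) \<circ> fst"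
      by (simp add: fun_eq_iff witness_map_def cY_def cX_def cW1_def)
    then have "distr (witness_law \<alpha> b \<delta> \<sigma>) borel (\<lambda>v. (cY v, cX v, cW1 v))
        = distr (distr (M \<Otimes>\<^sub>M rademacher) M fst) borel (\<lambda>w. (Y w, X w, W w))"
      unfolding witness_law_def
      by (simp add: distr_distr[OF borel_measurable_obs witness_map_measurable]
          distr_distr[OF obs_measurable measurable_fst])
    then show ?thesis
      by (simp add: prob_space.distr_pair_fst[OF prob_space_rademacher])
  qed
  ultimately show ?thesis
    by (intro same_law.intro observed_model_axioms same_law_axioms.intro)
      (simp_all add: witness_law_def observed_model_def prob_space_axioms)
qed

lemma continuous_on_noise: "continuous_on UNIV (noise \<alpha> b \<delta> \<sigma>)"
proof -
  have "continuous_on UNIV (\<lambda>v. signal \<alpha> b \<delta> (cY v, cX v, cW1 v))"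
    by (rule continuous_on_obs[OF continuous_on_signal])
  then show ?thesis
    unfolding noise_def[abs_def] coords_eq(4) divide_inverse by (intro continuous_intros)
qed

lemma witness_map_simps:
  "cY (witness_map \<alpha> b \<delta> \<sigma> p) = Y (fst p)" "cX (witness_map \<alpha> b \<delta> \<sigma> p) = X (fst p)"
  "cW1 (witness_map \<alpha> b \<delta> \<sigma> p) = W (fst p)"
  "\<sigma> \<noteq> 0 \<Longrightarrow> noise \<alpha> b \<delta> \<sigma> (witness_map \<alpha> b \<delta> \<sigma> p) = snd p"
  by (simp_all add: witness_map_def noise_def cY_def cX_def cW1_def cW2_def)

lemma integral_witness_law:
  fixes G :: "real \<times> real \<times> (real^'d) \<times> real \<Rightarrow> real"
  assumes G: "G \<in> borel_measurable borel"
    and "integrable M (\<lambda>w. G (witness_map \<alpha> b \<delta> \<sigma> (w, 1)))"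
    and "integrable M (\<lambda>w. G (witness_map \<alpha> b \<delta> \<sigma> (w, -1)))"
  shows "integrable (witness_law \<alpha> b \<delta> \<sigma>) G"
    and "integral\<^sup>L (witness_law \<alpha> b \<delta> \<sigma>) G
       = (integral\<^sup>L M (\<lambda>w. G (witness_map \<alpha> b \<delta> \<sigma> (w, 1)))
          + integral\<^sup>L M (\<lambda>w. G (witness_map \<alpha> b \<delta> \<sigma> (w, -1)))) / 2"
proof -
  note GP = measurable_compose[OF witness_map_measurable G]
  note pair = integral_pair_rademacher[OF prob_space_axioms GP, simplified, OF assms(2,3)]
  show "integrable (witness_law \<alpha> b \<delta> \<sigma>) G"
    unfolding witness_law_def using pair(1) integrable_distr_eq[OF witness_map_measurable G] by simp
  show "integral\<^sup>L (witness_law \<alpha> b \<delta> \<sigma>) G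
       = (integral\<^sup>L M (\<lambda>w. G (witness_map \<alpha> b \<delta> \<sigma> (w, 1)))
          + integral\<^sup>L M (\<lambda>w. G (witness_map \<alpha> b \<delta> \<sigma> (w, -1)))) / 2"
    unfolding witness_law_def using pair(2) integral_distr[OF witness_map_measurable G] by simp
qed

context
  fixes \<alpha> b \<delta> \<sigma> :: real
  assumes sigma_pos: "0 < \<sigma>"
begin

interpretation N: same_law M Y X W "witness_law \<alpha> b \<delta> \<sigma>"
  by (rule same_law_witness)

lemma noise_borel: "noise \<alpha> b \<delta> \<sigma> \<in> borel_measurable borel"
  using continuous_on_noise by (rule borel_measurable_continuous_onI)

lemma second_moment_noise: "second_moment (witness_law \<alpha> b \<delta> \<sigma>) (noise \<alpha> b \<delta> \<sigma>)"
proof -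
  have "integrable (witness_law \<alpha> b \<delta> \<sigma>) (\<lambda>v. (noise \<alpha> b \<delta> \<sigma> v)\<^sup>2)"
    using noise_borel sigma_pos by (intro integral_witness_law(1)) (simp_all add: witness_map_simps)
  moreover have "noise \<alpha> b \<delta> \<sigma> \<in> borel_measurable (witness_law \<alpha> b \<delta> \<sigma>)"
    using noise_borel measurable_cong_sets[OF N.sets_N refl] by blast
  ultimately show ?thesis
    by (simp add: second_moment_def)
qed

lemma mean_noise: "mean (witness_law \<alpha> b \<delta> \<sigma>) (noise \<alpha> b \<delta> \<sigma>) = 0"
  unfolding mean_def using noise_borel sigma_pos
  by (subst integral_witness_law(2)) (simp_all add: witness_map_simps)

lemma varm_noise: "varm (witness_law \<alpha> b \<delta> \<sigma>) (noise \<alpha> b \<delta> \<sigma>) = 1"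
proof -
  have "(\<lambda>v. noise \<alpha> b \<delta> \<sigma> v * noise \<alpha> b \<delta> \<sigma> v) \<in> borel_measurable borel"
    using noise_borel by measurable
  moreover have "varm (witness_law \<alpha> b \<delta> \<sigma>) (noise \<alpha> b \<delta> \<sigma>)
      = integral\<^sup>L (witness_law \<alpha> b \<delta> \<sigma>) (\<lambda>v. noise \<alpha> b \<delta> \<sigma> v * noise \<alpha> b \<delta> \<sigma> v)"
    by (simp add: varm_def cov_def mean_noise) (simp add: mean_def)
  ultimately show ?thesis
    using sigma_pos by (simp add: integral_witness_law(2) witness_map_simps prob_space)
qed

lemma cov_obs_noise:
  fixes F :: "real \<times> real \<times> (real^'d) \<Rightarrow> real"
  assumes F: "continuous_on UNIV F" and "second_moment M (\<lambda>w. F (Y w, X w, W w))"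
  shows "cov (witness_law \<alpha> b \<delta> \<sigma>) (\<lambda>v. F (cY v, cX v, cW1 v)) (noise \<alpha> b \<delta> \<sigma>) = 0"
proof -
  define m where "m = mean (witness_law \<alpha> b \<delta> \<sigma>) (\<lambda>v. F (cY v, cX v, cW1 v))"
  have "(\<lambda>v. F (cY v, cX v, cW1 v)) \<in> borel_measurable borel"
    using measurable_compose[OF borel_measurable_obs borel_measurable_continuous_onI[OF F]] by simp
  then have "(\<lambda>v. (F (cY v, cX v, cW1 v) - m) * noise \<alpha> b \<delta> \<sigma> v) \<in> borel_measurable borel"
    using noise_borel by measurable
  moreover have "cov (witness_law \<alpha> b \<delta> \<sigma>) (\<lambda>v. F (cY v, cX v, cW1 v)) (noise \<alpha> b \<delta> \<sigma>)
      = integral\<^sup>L (witness_law \<alpha> b \<delta> \<sigma>) (\<lambda>v. (F (cY v, cX v, cW1 v) - m) * noise \<alpha> b \<delta> \<sigma> v)"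
    by (simp add: cov_def mean_noise m_def[symmetric]) (simp add: mean_def)
  ultimately show ?thesis
    using sigma_pos second_moment_integrable[OF assms(2)]
    by (simp add: integral_witness_law(2) witness_map_simps)
qed

lemma second_moment_witness_W2: "second_moment (witness_law \<alpha> b \<delta> \<sigma>) cW2"
proof -
  have "second_moment (witness_law \<alpha> b \<delta> \<sigma>) (\<lambda>v. signal \<alpha> b \<delta> (cY v, cX v, cW1 v))"
    using N.second_moment_obs_iff[OF continuous_on_signal] second_moment_signal by simp
  then have "second_moment (witness_law \<alpha> b \<delta> \<sigma>)
      (\<lambda>v. signal \<alpha> b \<delta> (cY v, cX v, cW1 v) + \<sigma> * noise \<alpha> b \<delta> \<sigma> v)"
    using second_moment_noise by simp
  also have "(\<lambda>v. signal \<alpha> b \<delta> (cY v, cX v, cW1 v) + \<sigma> * noise \<alpha> b \<delta> \<sigma> v) = cW2"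
    using sigma_pos by (simp add: fun_eq_iff noise_def)
  finally show ?thesis .
qed

lemma varm_obs_plus_noise:
  fixes F :: "real \<times> real \<times> (real^'d) \<Rightarrow> real"
  assumes F: "continuous_on UNIV F" and sm_F: "second_moment M (\<lambda>w. F (Y w, X w, W w))"
  shows "varm (witness_law \<alpha> b \<delta> \<sigma>) (\<lambda>v. F (cY v, cX v, cW1 v) + c * noise \<alpha> b \<delta> \<sigma> v)
       = varm M (\<lambda>w. F (Y w, X w, W w)) + c\<^sup>2"
proof -
  have "second_moment (witness_law \<alpha> b \<delta> \<sigma>) (\<lambda>v. F (cY v, cX v, cW1 v))"
    using N.second_moment_obs_iff[OF F] sm_F by simp
  moreover have "cov (witness_law \<alpha> b \<delta> \<sigma>) (noise \<alpha> b \<delta> \<sigma>) (\<lambda>v. F (cY v, cX v, cW1 v)) = 0"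
    using cov_obs_noise[OF F sm_F] by (simp add: cov_sym)
  ultimately show ?thesis
    using second_moment_noise cov_obs_noise[OF F sm_F] varm_noise N.cov_obs_eq[OF F F]
    by (simp add: varm_def N.N.cov_add_left N.N.cov_add_right N.N.cov_scale_left
        N.N.cov_scale_right power2_eq_square)
qed

lemma A1_witness_law: "A1 (witness_law \<alpha> b \<delta> \<sigma>) cY cX cW1 cW2"
  unfolding A1_def posdef_def
proof (intro allI impI)
  fix v :: "real^'d idx_YXWW"
  assume "v \<noteq> 0"
  define u :: "real^'d idx_YXW" where "u = (\<chi> k. case k of lY \<Rightarrow> v $ mY | lX \<Rightarrow> v $ mX | lW i \<Rightarrow> v $ mW1 i)"
  define L where "L t = v $ mY * fst t + v $ mX * fst (snd t) + (\<chi> i. v $ mW1 i) \<bullet> snd (snd t)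
    + v $ mW2 * signal \<alpha> b \<delta> t" for t
  have L_cont: "continuous_on UNIV L"
    unfolding L_def[abs_def] by (intro continuous_intros continuous_on_signal)
  have L_obs: "(\<lambda>w. L (Y w, X w, W w))
      = (\<lambda>w. u \<bullet> (\<chi> k. fam_YXW Y X W k w) + v $ mW2 * signal \<alpha> b \<delta> (Y w, X w, W w))"
    by (simp add: fun_eq_iff L_def inner_fam_YXW u_def)
  have L_sm: "second_moment M (\<lambda>w. L (Y w, X w, W w))"
    unfolding L_obs using second_moment_fam_YXW second_moment_signal by simp
  have sm: "second_moment (witness_law \<alpha> b \<delta> \<sigma>) (fam_YXWW cY cX cW1 cW2 k)" for k
    by (cases k) (simp_all add: fam_YXWW_def N.second_moment_N_W1 second_moment_witness_W2)
  have "(\<lambda>z. v \<bullet> (\<chi> k. fam_YXWW cY cX cW1 cW2 k z))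
      = (\<lambda>z. L (cY z, cX z, cW1 z) + (v $ mW2 * \<sigma>) * noise \<alpha> b \<delta> \<sigma> z)"
    using sigma_pos by (simp add: fun_eq_iff inner_fam_YXWW L_def noise_def field_simps)
  then have quad: "v \<bullet> (covmat (witness_law \<alpha> b \<delta> \<sigma>) (fam_YXWW cY cX cW1 cW2) *v v)
      = varm M (\<lambda>w. L (Y w, X w, W w)) + (v $ mW2 * \<sigma>)\<^sup>2"
    using N.N.varm_inner[of "fam_YXWW cY cX cW1 cW2" v, OF sm]
      varm_obs_plus_noise[OF L_cont L_sm, of "v $ mW2 * \<sigma>"]
    by simp
  show "0 < v \<bullet> (covmat (witness_law \<alpha> b \<delta> \<sigma>) (fam_YXWW cY cX cW1 cW2) *v v)"
  proof (cases "v $ mW2 = 0")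
    case False
    then show ?thesis
      unfolding quad using sigma_pos varm_nonneg[of "\<lambda>w. L (Y w, X w, W w)"]
      by (simp add: add_nonneg_pos)
  next
    case True
    have "u \<noteq> 0"
    proof
      assume "u = 0"
      then have "u $ lY = 0" "u $ lX = 0" "u $ lW i = 0" for i
        by simp_all
      then have "v $ k = 0" for k
        using True by (cases k) (simp_all add: u_def)
      with \<open>v \<noteq> 0\<close> show False by (simp add: vec_eq_iff)
    qed
    with True show ?thesis
      unfolding quad L_obs using posdef_varm_pos[OF posdef_YXW second_moment_fam_YXW] by simp
  qed
qed

lemma wcoef_witness_W2: "wcoef (witness_law \<alpha> b \<delta> \<sigma>) cW1 cW2 = \<delta> *\<^sub>R wcoef M W X"
  and wresid_witness_W2: "wresid (witness_law \<alpha> b \<delta> \<sigma>) cW1 cW2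
     = (\<lambda>v. \<alpha> * wresid (witness_law \<alpha> b \<delta> \<sigma>) cW1 cY v + b * wresid (witness_law \<alpha> b \<delta> \<sigma>) cW1 cX v
            + \<sigma> * noise \<alpha> b \<delta> \<sigma> v)"
proof -
  let ?N = "witness_law \<alpha> b \<delta> \<sigma>"
  have W2_eq: "(\<lambda>v. cW2 v - (\<delta> *\<^sub>R wcoef M W X) \<bullet> cW1 v)
      = (\<lambda>v. \<alpha> * wresid ?N cW1 cY v + b * wresid ?N cW1 cX v + \<sigma> * noise \<alpha> b \<delta> \<sigma> v)"
    using sigma_pos
    by (simp add: fun_eq_iff noise_def wresid_def N.wcoef_N_Y N.wcoef_N_X signal_def field_simps)
  have "cov ?N (\<lambda>v. cW1 v $ i) (noise \<alpha> b \<delta> \<sigma>) = 0" for i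
    using cov_obs_noise[of "\<lambda>t. snd (snd t) $ i"] second_moment_W1[of i]
    by (simp add: continuous_intros)
  then have "cov ?N (\<lambda>v. cW1 v $ i)
      (\<lambda>v. \<alpha> * wresid ?N cW1 cY v + b * wresid ?N cW1 cX v + \<sigma> * noise \<alpha> b \<delta> \<sigma> v) = 0" for i
    using N.N.cov_W_wresid[of cY i] N.N.cov_W_wresid[of cX i] N.second_moment_N_W1[of i]
      second_moment_noise
    by (simp add: N.N.cov_add_right N.N.cov_scale_right)
  then have "proj_coef ?N (wfam cW1) cW2 = \<delta> *\<^sub>R wcoef M W X"
    by (intro N.N.proj_coef_unique[OF N.N.invertible_covmat_W N.N.second_moment_wfam
          second_moment_witness_W2]) (simp add: W2_eq[symmetric] wfam_def)
  then show "wcoef ?N cW1 cW2 = \<delta> *\<^sub>R wcoef M W X"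
    by (simp add: wcoef_def)
  then show "wresid ?N cW1 cW2
     = (\<lambda>v. \<alpha> * wresid ?N cW1 cY v + b * wresid ?N cW1 cX v + \<sigma> * noise \<alpha> b \<delta> \<sigma> v)"
    using W2_eq by (simp add: wresid_def)
qed

lemma witness_moments:
  "varm (witness_law \<alpha> b \<delta> \<sigma>) (wresid (witness_law \<alpha> b \<delta> \<sigma>) cW1 cW2)
     = \<alpha>\<^sup>2 * varm M (wresid M W Y) + 2 * \<alpha> * b * cov M (wresid M W Y) (wresid M W X)
       + b\<^sup>2 * varm M (wresid M W X) + \<sigma>\<^sup>2"
  "cov (witness_law \<alpha> b \<delta> \<sigma>) (wresid (witness_law \<alpha> b \<delta> \<sigma>) cW1 cX) (wresid (witness_law \<alpha> b \<delta> \<sigma>) cW1 cW2)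
     = \<alpha> * cov M (wresid M W Y) (wresid M W X) + b * varm M (wresid M W X)"
  "cov (witness_law \<alpha> b \<delta> \<sigma>) (wresid (witness_law \<alpha> b \<delta> \<sigma>) cW1 cY) (wresid (witness_law \<alpha> b \<delta> \<sigma>) cW1 cW2)
     = \<alpha> * varm M (wresid M W Y) + b * cov M (wresid M W Y) (wresid M W X)"
proof -
  let ?N = "witness_law \<alpha> b \<delta> \<sigma>"
  let ?RY = "wresid ?N cW1 cY" and ?RX = "wresid ?N cW1 cX" and ?Z = "noise \<alpha> b \<delta> \<sigma>"
  have sm [simp]: "second_moment ?N ?RY" "second_moment ?N ?RX" "second_moment ?N ?Z"
    using second_moment_noise by simp_all
  have "cov ?N ?RY ?Z = 0" "cov ?N ?RX ?Z = 0"
    using cov_obs_noise[of "\<lambda>t. fst t - wcoef M W Y \<bullet> snd (snd t)"]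
      cov_obs_noise[of "\<lambda>t. fst (snd t) - wcoef M W X \<bullet> snd (snd t)"]
    by (simp_all add: wresid_def N.wcoef_N_Y N.wcoef_N_X continuous_intros)
  then have orth: "cov ?N ?RY ?Z = 0" "cov ?N ?RX ?Z = 0" "cov ?N ?Z ?RY = 0" "cov ?N ?Z ?RX = 0"
    by (simp_all add: cov_sym)
  note moments = N.wresid_moments_N[unfolded varm_def] varm_noise[unfolded varm_def]
  have g': "cov ?N ?RX ?RY = cov M (wresid M W Y) (wresid M W X)"
    using moments(3) by (simp add: cov_sym)
  show "varm ?N (wresid ?N cW1 cW2) = \<alpha>\<^sup>2 * varm M (wresid M W Y)
      + 2 * \<alpha> * b * cov M (wresid M W Y) (wresid M W X) + b\<^sup>2 * varm M (wresid M W X) + \<sigma>\<^sup>2"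
    unfolding wresid_witness_W2 varm_def using orth moments g'
    by (simp add: N.N.cov_add_left N.N.cov_add_right N.N.cov_scale_left N.N.cov_scale_right
        power2_eq_square algebra_simps)
  show "cov ?N ?RX (wresid ?N cW1 cW2)
      = \<alpha> * cov M (wresid M W Y) (wresid M W X) + b * varm M (wresid M W X)"
    unfolding wresid_witness_W2 using orth moments g'
    by (simp add: N.N.cov_add_right N.N.cov_scale_right varm_def algebra_simps)
  show "cov ?N ?RY (wresid ?N cW1 cW2)
      = \<alpha> * varm M (wresid M W Y) + b * cov M (wresid M W Y) (wresid M W X)"
    unfolding wresid_witness_W2 using orth moments
    by (simp add: N.N.cov_add_right N.N.cov_scale_right varm_def algebra_simps)
qed

end

lemma witness_in_B_I:
  assumes "witness_params (varm M (wresid M W Y)) (varm M (wresid M W X))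
             (cov M (wresid M W Y) (wresid M W X)) (varm M (\<lambda>w. wcoef M W X \<bullet> W w)) r \<alpha> b \<delta> \<sigma>"
  shows "\<exists>b0\<le>0. b0 \<in> B_I M Y X W r 0 1"
proof -
  define vy where "vy = varm M (wresid M W Y)"
  define vx where "vx = varm M (wresid M W X)"
  define g where "g = cov M (wresid M W Y) (wresid M W X)"
  define Vx where "Vx = varm M (\<lambda>w. wcoef M W X \<bullet> W w)"
  define vv where "vv = \<alpha>\<^sup>2 * vy + 2 * \<alpha> * b * g + b\<^sup>2 * vx + \<sigma>\<^sup>2"
  define cxv where "cxv = \<alpha> * g + b * vx"
  define cyv where "cyv = \<alpha> * vy + b * g"
  have \<sigma>: "0 < \<sigma>" and unit: "\<delta>\<^sup>2 * Vx + vv = 1" and sign: "g * vv \<le> cyv * cxv"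
    and rx: "\<bar>cxv / vv\<bar> \<le> r * sqrt (Vx - 2 * (cxv / vv) * (\<delta> * Vx) + (cxv / vv)\<^sup>2 * (\<delta>\<^sup>2 * Vx))"
    using assms by (simp_all add: witness_params_def Let_def vy_def vx_def g_def Vx_def vv_def cxv_def cyv_def)
  let ?N = "witness_law \<alpha> b \<delta> \<sigma>"
  interpret N: same_law M Y X W ?N
    by (rule same_law_witness)
  interpret L: long_model ?N cY cX cW2 cW1
    using N.prob_space_N A1_witness_law[OF \<sigma>] second_moment_witness_W2[OF \<sigma>] N.second_moment_N_W1
    by (intro long_model.intro long_model_axioms.intro) (simp_all add: A1_def)
  note moments = witness_moments[where \<alpha>=\<alpha> and b=b and \<delta>=\<delta>, OF \<sigma>, folded vy_def vx_def g_def, folded vv_def cxv_def cyv_def]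
  have fitted_W2: "(\<lambda>v. wcoef ?N cW1 cW2 \<bullet> cW1 v) = (\<lambda>v. \<delta> * (wcoef ?N cW1 cX \<bullet> cW1 v))"
    by (simp add: wcoef_witness_W2[OF \<sigma>] N.wcoef_N_X)
  have Vw: "varm ?N (\<lambda>v. wcoef ?N cW1 cW2 \<bullet> cW1 v) = \<delta>\<^sup>2 * Vx"
    unfolding fitted_W2 using N.varm_fitted_N_X by (simp add: N.N.varm_scale Vx_def)
  have k: "cov ?N (\<lambda>v. wcoef ?N cW1 cX \<bullet> cW1 v) (\<lambda>v. wcoef ?N cW1 cW2 \<bullet> cW1 v) = \<delta> * Vx"
    unfolding fitted_W2 using N.varm_fitted_N_X by (simp add: N.N.cov_scale_right varm_def Vx_def)
  have var_W2: "varm ?N cW2 = 1"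
    using N.N.varm_fitted_plus_wresid[OF second_moment_witness_W2[OF \<sigma>]] Vw moments(1) unit by simp
  have "beta_long ?N cY cX cW1 cW2 \<le> 0"
    using L.beta_long_nonpos_iff sign moments N.wresid_moments_N
    by (simp add: vy_def vx_def g_def mult.commute)
  moreover have "A_rx r ?N cX cW1 cW2"
    using L.A_rx_iff[OF var_W2] L.pi2_eq moments Vw k N.varm_fitted_N_X rx by (simp add: Vx_def)
  moreover have "A_c 0 1 ?N cW1 cW2"
  proof -
    have "0 < vv" using L.varm_wresid_W2_pos moments(1) by simp
    then show ?thesis
      using L.R_W2_W1_eq Vw var_W2 unit N.N.varm_nonneg[of "\<lambda>v. wcoef ?N cW1 cW2 \<bullet> cW1 v"]
      by (simp add: A_c_def)
  qed
  ultimately have "beta_long ?N cY cX cW1 cW2 \<in> B_I M Y X W r 0 1"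
    unfolding B_I_def
    using N.prob_space_N N.sets_N N.second_moment_N_W1 second_moment_witness_W2[OF \<sigma>] N.distr_N
      var_W2 A1_witness_law[OF \<sigma>]
    by (auto intro!: exI[of _ ?N])
  then show ?thesis
    using \<open>beta_long ?N cY cX cW1 cW2 \<le> 0\<close> by blast
qed

lemma rx_breakdown_le_of_B_I:
  assumes "b0 \<in> B_I M Y X W r 0 1" and "b0 \<le> 0" and "0 \<le> r"
    and "0 \<le> beta_med M Y X W" and "covvec M (wfam W) X \<noteq> 0"
  shows "rx_breakdown (varm M (\<lambda>w. wcoef M W X \<bullet> W w)) (varm M (wresid M W Y))
           (cov M (wresid M W Y) (wresid M W X)) \<le> r"
proof -
  obtain N where N: "prob_space N" "sets N = sets borel" "second_moment N cW2"
      "distr N borel (\<lambda>\<omega>. (cY \<omega>, cX \<omega>, cW1 \<omega>)) = distr M borel (\<lambda>\<omega>. (Y \<omega>, X \<omega>, W \<omega>))"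
      "varm N cW2 = 1" "A1 N cY cX cW1 cW2" "A_rx r N cX cW1 cW2" "beta_long N cY cX cW1 cW2 = b0"
    using assms(1) unfolding B_I_def by blast
  interpret same_law M Y X W N
    using N(1,2,4) observed_model_axioms prob_space_axioms
    by (intro same_law.intro same_law_axioms.intro) (simp_all add: observed_model_def)
  show ?thesis
    using rx_breakdown_le_of_law[OF N(6,3,5,7) assms(3)] N(8) assms(2,4,5) by simp
qed

text \<open>The witness here is pure noise, \<open>W\<^sub>2 = Z\<close>.\<close>
lemma B_I_zero_of_uncorrelated_wresid:
  assumes "cov M (wresid M W Y) (wresid M W X) = 0"
  shows "\<exists>b0\<le>0. b0 \<in> B_I M Y X W 0 0 1"
proof -
  have "witness_params (varm M (wresid M W Y)) (varm M (wresid M W X))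
      (cov M (wresid M W Y) (wresid M W X)) (varm M (\<lambda>w. wcoef M W X \<bullet> W w)) 0 0 0 0 1"
    by (simp add: witness_params_def assms)
  then show ?thesis
    by (rule witness_in_B_I)
qed

lemma rx_sign_reversing_below:
  assumes "0 \<le> beta_med M Y X W" and "covvec M (wfam W) X \<noteq> 0"
    and "rx_breakdown (varm M (\<lambda>w. wcoef M W X \<bullet> W w)) (varm M (wresid M W Y))
           (cov M (wresid M W Y) (wresid M W X)) < y"
  shows "\<exists>r. 0 \<le> r \<and> r < y \<and> (\<exists>b0\<le>0. b0 \<in> B_I M Y X W r 0 1)"
proof -
  define vy where "vy = varm M (wresid M W Y)"
  define vx where "vx = varm M (wresid M W X)"
  define g where "g = cov M (wresid M W Y) (wresid M W X)"
  define Vx where "Vx = varm M (\<lambda>w. wcoef M W X \<bullet> W w)"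
  have "0 \<le> g"
    using cov_wresid_eq_beta_med assms(1) varm_wresid_X_pos by (simp add: g_def)
  show ?thesis
  proof (cases "g = 0")
    case True
    then have "0 < y"
      using assms(3) by (simp add: rx_breakdown_def g_def)
    with True show ?thesis
      using B_I_zero_of_uncorrelated_wresid by (auto simp: g_def)
  next
    case False
    have pos: "0 < g" "0 < vx" "0 < Vx" "0 < vy"
      using \<open>0 \<le> g\<close> False varm_wresid_X_pos varm_fitted_X_pos[OF assms(2)] varm_wresid_Y_pos
      by (simp_all add: g_def vx_def Vx_def vy_def)
    define t0 where "t0 = rx_breakdown Vx vy g"
    have "g\<^sup>2 / (Vx * vy + g\<^sup>2) < 1"
      using pos by (simp add: divide_less_eq add_pos_nonneg)
    then have "0 \<le> t0" "t0 < 1"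
      using pos by (simp_all add: t0_def rx_breakdown_def add_pos_nonneg)
    define r where "r = (t0 + min y 1) / 2"
    have r: "t0 < r" "r < 1" "r < y"
      using assms(3) \<open>t0 < 1\<close> by (auto simp: r_def t0_def vy_def g_def Vx_def)
    have "0 < vx * vy - g\<^sup>2"
      using gram_det_wresid_YX_pos by (simp add: vx_def vy_def g_def mult.commute)
    then obtain \<alpha> b \<delta> \<sigma> where "witness_params vy vx g Vx r \<alpha> b \<delta> \<sigma>"
      using witness_params_exist[OF pos(1-3) \<open>0 < vx * vy - g\<^sup>2\<close>, of r] r(1,2)
      by (auto simp: t0_def)
    then have "\<exists>b0\<le>0. b0 \<in> B_I M Y X W r 0 1"
      by (intro witness_in_B_I) (simp add: vy_def vx_def g_def Vx_def)
    then show ?thesis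
      using r \<open>0 \<le> t0\<close> by (intro exI[of _ r]) simp
  qed
qed

end

lemma cInf_eq_of_approx:
  fixes a :: "'a::{conditionally_complete_linorder, no_top}"
  assumes "\<And>x. x \<in> S \<Longrightarrow> a \<le> x" and "\<And>y. a < y \<Longrightarrow> \<exists>x\<in>S. x < y"
  shows "Inf S = a"
proof (rule cInf_eq)
  show "y \<le> a" if "\<And>x. x \<in> S \<Longrightarrow> y \<le> x" for y
    using assms(2)[of y] that by (meson not_le)
qed (use assms(1) in blast)

theorem mainTheorem2:
  fixes M :: "'a measure" and Y X :: "'a \<Rightarrow> real" and W1 :: "'a \<Rightarrow> real^'d"
  assumes "prob_space M"
    and "second_moment M Y" and "second_moment M X" and "\<forall>i. second_moment M (\<lambda>\<omega>. W1 \<omega> $ i)"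
    and "posdef (covmat M (fam_YXW Y X W1))"
    and "covvec M (wfam W1) X \<noteq> 0"
    and "beta_med M Y X W1 \<ge> 0"
  shows "Inf {r. r \<ge> 0 \<and> (\<exists>b\<le>0. b \<in> B_I M Y X W1 r 0 1)} =
         (let R2xw = rsq M X (wfam W1);
              R2yxw = (beta_med M Y X W1)\<^sup>2 * varm M (perp M X (wfam W1)) / varm M (perp M Y (wfam W1))
          in sqrt (R2yxw / (R2xw / (1 - R2xw) + R2yxw)))"
proof -
  interpret observed_model M Y X W1
    using assms(1-5) by (intro observed_model.intro observed_model_axioms.intro) simp_all
  show ?thesis
    unfolding breakdown_formula_eq[OF assms(6)]
  proof (rule cInf_eq_of_approx)
    show "\<exists>r\<in>{r. r \<ge> 0 \<and> (\<exists>b\<le>0. b \<in> B_I M Y X W1 r 0 1)}. r < y"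
      if "rx_breakdown (varm M (\<lambda>w. wcoef M W1 X \<bullet> W1 w)) (varm M (wresid M W1 Y))
            (cov M (wresid M W1 Y) (wresid M W1 X)) < y" for y
      using rx_sign_reversing_below[OF assms(7,6) that] by blast
  qed (use rx_breakdown_le_of_B_I assms(6,7) in blast)
qed

end
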